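(* Let $M$ be an extrinsically homogeneous Lagrangian submanifold of $N$. Suppose there is a unique $\Delta_1$-orthonormal frame $\{E_1,E_2,E_3\}$ with respect to which $A$ and $B$ take type I form. Then the angle functions $\theta_1,\theta_2,\theta_3$ and all the functions $h_{ij}^k$ and $\omega_{ij}^k$ associated to this frame are constant on $M$.
   Context: Let $\langle\alpha,\beta\rangle=\tfrac12\operatorname{tr}(\alpha\beta)$ on $\mathfrak{sl}(2,\mathbb R)$ (traceless real $2\times2$ matrices); tangent vectors of $\mathrm{SL}(2,\mathbb R)$ at $a$ are $a\alpha$, $\alpha\in\mathfrak{sl}(2,\mathbb R)$. On $N=\mathrm{SL}(2,\mathbb R)\times\mathrm{SL}(2,\mathbb R)$: $g((a\alpha,b\beta),(a\gamma,b\delta))=\tfrac23(\langle\alpha,\gamma\rangle+\langle\beta,\delta\rangle)-\tfrac13(\langle\beta,\gamma\rangle+\langle\alpha,\delta\rangle)$, $J(a\alpha,b\beta)=\tfrac1{\sqrt3}(a(\alpha-2\beta),b(2\alpha-\beta))$, $P(a\alpha,b\beta)=(a\beta,b\alpha)$; $\tilde\nabla$ is the Levi-Civita connection of $g$. The maps $\phi_{(a,b,c)}(p,q)=(apc^{-1},bqc^{-1})$, $a,b,c\in\mathrm{SL}(2,\mathbb R)$, form the group $\mathrm{Iso}_o$. A Lagrangian submanifold $M$ is 3-dimensional with nondegenerate induced metric and $J(TM)$ equal to the normal bundle; $P|_{TM}=A+JB$ with $A,B:TM\to TM$. It is extrinsically homogeneous if a Lie subgroup of $\mathrm{Iso}_o$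 acts transitively on it. $\nabla$ and $h$ are defined by $\tilde\nabla_XY=\nabla_XY+h(X,Y)$; for a frame $\{E_i\}$, $\nabla_{E_i}E_j=\sum_k\omega_{ij}^kE_k$ and $h(E_i,E_j)=\sum_kh_{ij}^kJE_k$. A frame is $\Delta_1$-orthonormal if $(g(E_i,E_j))=\mathrm{diag}(-1,1,1)$. $A,B$ take type I form with respect to it if $A=\mathrm{diag}(\cos2\theta_1,\cos2\theta_2,\cos2\theta_3)$ and $B=\mathrm{diag}(\sin2\theta_1,\sin2\theta_2,\sin2\theta_3)$ (i.e. $AE_i=\cos2\theta_iE_i$, $BE_i=\sin2\theta_iE_i$) for functions $\theta_i$ (the angle functions) with $\theta_1+\theta_2+\theta_3\equiv0\pmod\pi$. *)

theory Defs
  imports "HOL-Analysis.Analysis"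
begin

type_synonym mat2 = "real^2^2"
type_synonym pt = "mat2 \<times> mat2"   \<comment> \<open>ambient space containing N = SL(2,R) x SL(2,R)\<close>

fun Ck_on :: "nat \<Rightarrow> ('a::euclidean_space \<Rightarrow> 'b::euclidean_space) \<Rightarrow> 'a set \<Rightarrow> bool" where
  "Ck_on 0 f U = continuous_on U f"
| "Ck_on (Suc k) f U =
     ((\<forall>x\<in>U. f differentiable (at x)) \<and>
      (\<forall>v. Ck_on k (\<lambda>x. frechet_derivative f (at x) v) U))"

definition smooth_on :: "('a::euclidean_space \<Rightarrow> 'b::euclidean_space) \<Rightarrow> 'a set \<Rightarrow> bool" where
  "smooth_on f U \<longleftrightarrow> open U \<and> (\<forall>k. Ck_on k f U)"

definition SL2 :: "mat2 set" where "SL2 = {a. det a = 1}"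
definition sl2 :: "mat2 set" where "sl2 = {\<alpha>. trace \<alpha> = 0}"
definition NN :: "pt set" where "NN = SL2 \<times> SL2"
definition galg :: "pt set" where "galg = sl2 \<times> sl2"

definition ip :: "mat2 \<Rightarrow> mat2 \<Rightarrow> real" where "ip \<alpha> \<beta> = trace (\<alpha> ** \<beta>) / 2"

text \<open>left trivialisation: the tangent vector (a alpha, b beta) at (a,b) corresponds to (alpha,beta)\<close>
definition lt :: "pt \<Rightarrow> pt \<Rightarrow> pt" where
  "lt p v = (matrix_inv (fst p) ** fst v, matrix_inv (snd p) ** snd v)"
definition lmul :: "pt \<Rightarrow> pt \<Rightarrow> pt" where
  "lmul p u = (fst p ** fst u, snd p ** snd u)"

definition TN :: "pt \<Rightarrow> pt set" where "TN p = {v. lt p v \<in> galg}"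

definition gL :: "pt \<Rightarrow> pt \<Rightarrow> real" where
  "gL u w = 2/3 * (ip (fst u) (fst w) + ip (snd u) (snd w))
          - 1/3 * (ip (snd u) (fst w) + ip (fst u) (snd w))"

definition gN :: "pt \<Rightarrow> pt \<Rightarrow> pt \<Rightarrow> real" where "gN p v w = gL (lt p v) (lt p w)"

definition JN :: "pt \<Rightarrow> pt \<Rightarrow> pt" where
  "JN p v = lmul p ((1 / sqrt 3) *\<^sub>R (fst (lt p v) - 2 *\<^sub>R snd (lt p v)),
                    (1 / sqrt 3) *\<^sub>R (2 *\<^sub>R fst (lt p v) - snd (lt p v)))"

definition PN :: "pt \<Rightarrow> pt \<Rightarrow> pt" where
  "PN p v = lmul p (snd (lt p v), fst (lt p v))"

definition brk :: "pt \<Rightarrow> pt \<Rightarrow> pt" where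
  "brk u w = (fst u ** fst w - fst w ** fst u, snd u ** snd w - snd w ** snd u)"

text \<open>Levi-Civita connection of the left-invariant metric g on left-invariant fields (Koszul formula)\<close>
definition Gam :: "pt \<Rightarrow> pt \<Rightarrow> pt" where
  "Gam u w = (THE z. z \<in> galg \<and> (\<forall>x\<in>galg.
      gL z x = (gL (brk u w) x - gL (brk w x) u + gL (brk x u) w) / 2))"

text \<open>Levi-Civita connection of g: nabla~_v Y at p, for a vector field Y (smooth near p) and v in T_p N\<close>
definition LC :: "pt \<Rightarrow> (pt \<Rightarrow> pt) \<Rightarrow> pt \<Rightarrow> pt" where
  "LC p Y v = lmul p (frechet_derivative (\<lambda>q. lt q (Y q)) (at p) v + Gam (lt p v) (lt p (Y p)))"

definition phi :: "mat2 \<Rightarrow> mat2 \<Rightarrow> mat2 \<Rightarrow> pt \<Rightarrow> pt" where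
  "phi a b c x = (a ** fst x ** matrix_inv c, b ** snd x ** matrix_inv c)"

definition Iso_o :: "(pt \<Rightarrow> pt) set" where
  "Iso_o = {phi a b c | a b c. a \<in> SL2 \<and> b \<in> SL2 \<and> c \<in> SL2}"

definition submanifold3 :: "pt set \<Rightarrow> bool" where
  "submanifold3 M \<longleftrightarrow> (\<forall>p\<in>M. \<exists>U V (f :: real^3 \<Rightarrow> pt). open U \<and> p \<in> U \<and> open V \<and>
      smooth_on f V \<and> f ` V = M \<inter> U \<and> inj_on f V \<and> continuous_on (M \<inter> U) (inv_into V f) \<and>
      (\<forall>x\<in>V. inj (frechet_derivative f (at x))))"

definition TM :: "pt set \<Rightarrow> pt \<Rightarrow> pt set" where
  "TM M p = {v. \<exists>\<gamma>. \<gamma> 0 = p \<and> range \<gamma> \<subseteq> M \<and> (\<gamma> has_vector_derivative v) (at 0)}"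

definition normal_space :: "pt set \<Rightarrow> pt \<Rightarrow> pt set" where
  "normal_space M p = {w \<in> TN p. \<forall>v\<in>TM M p. gN p v w = 0}"

definition lagrangian :: "pt set \<Rightarrow> bool" where
  "lagrangian M \<longleftrightarrow> M \<subseteq> NN \<and> submanifold3 M \<and>
     (\<forall>p\<in>M. (\<forall>v\<in>TM M p. (\<forall>w\<in>TM M p. gN p v w = 0) \<longrightarrow> v = 0) \<and>
             JN p ` TM M p = normal_space M p)"

definition ext_homogeneous :: "pt set \<Rightarrow> bool" where
  "ext_homogeneous M \<longleftrightarrow> (\<exists>G. G \<subseteq> Iso_o \<and> id \<in> G \<and>
      (\<forall>f\<in>G. \<forall>f'\<in>G. f \<circ> f' \<in> G) \<and> (\<forall>f\<in>G. \<exists>f'\<in>G. f \<circ> f' = id \<and> f' \<circ> f = id) \<and>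
      (\<forall>f\<in>G. f ` M = M) \<and> (\<forall>p\<in>M. \<forall>q\<in>M. \<exists>f\<in>G. f p = q))"

definition AB :: "pt set \<Rightarrow> pt \<Rightarrow> pt \<Rightarrow> pt \<times> pt" where
  "AB M p v = (THE xy. fst xy \<in> TM M p \<and> snd xy \<in> TM M p \<and> PN p v = fst xy + JN p (snd xy))"

definition opA :: "pt set \<Rightarrow> pt \<Rightarrow> pt \<Rightarrow> pt" where "opA M p v = fst (AB M p v)"
definition opB :: "pt set \<Rightarrow> pt \<Rightarrow> pt \<Rightarrow> pt" where "opB M p v = snd (AB M p v)"

definition Delta1_frame :: "pt set \<Rightarrow> pt \<Rightarrow> (nat \<Rightarrow> pt) \<Rightarrow> bool" where
  "Delta1_frame M p e \<longleftrightarrow> (\<forall>i\<in>{1,2,3}. e i \<in> TM M p) \<and>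
     (\<forall>i\<in>{1,2,3}. \<forall>j\<in>{1,2,3}. gN p (e i) (e j) =
        (if i = j then (if i = 1 then -1 else 1) else 0))"

definition typeI :: "pt set \<Rightarrow> pt \<Rightarrow> (nat \<Rightarrow> pt) \<Rightarrow> (nat \<Rightarrow> real) \<Rightarrow> bool" where
  "typeI M p e \<theta> \<longleftrightarrow> (\<forall>i\<in>{1,2,3}. opA M p (e i) = cos (2 * \<theta> i) *\<^sub>R e i \<and>
                                    opB M p (e i) = sin (2 * \<theta> i) *\<^sub>R e i) \<and>
     (\<exists>k::int. \<theta> 1 + \<theta> 2 + \<theta> 3 = of_int k * pi)"

end

theory Submission
  imports Defs
begin

text \<open>For \<open>q, p \<in> M\<close> choose an isometry \<open>\<phi>\<close> of the homogeneity group with \<open>\<phi> q = p\<close>.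
  It preserves \<open>g\<close>, \<open>J\<close>, \<open>P\<close> and the Levi-Civita connection, so it carries the type I frame
  at \<open>q\<close> to a \<open>\<Delta>\<^sub>1\<close>-orthonormal frame at \<open>p\<close> in which \<open>A\<close> and \<open>B\<close> are of type I
  with the same angles. By uniqueness that frame is the given one up to order and signs, and
  by connectedness the same signed permutation works along all of \<open>M\<close>. Hence
  \<open>cos 2\<theta>\<^sub>i = \<plusminus>g(P E\<^sub>i, E\<^sub>i)\<close>, \<open>sin 2\<theta>\<^sub>i = \<plusminus>g(P E\<^sub>i, J E\<^sub>i)\<close> and the components
  \<open>\<omega>\<^sub>i\<^sub>j\<^sup>k\<close>, \<open>h\<^sub>i\<^sub>j\<^sup>k\<close> of \<open>\<nabla>\<^sub>E\<^sub>i E\<^sub>j\<close> take at \<open>q\<close> one of finitely many values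
  determined at \<open>p\<close>. Being continuous on the connected \<open>M\<close>, they are constant.\<close>

section \<open>Matrix algebra\<close>

lemma matrix_add_rdistrib: "(A + B) ** C = A ** C + B ** (C::'a::semiring_1^_^_)"
  by (vector matrix_matrix_mult_def sum.distrib[symmetric] field_simps)

lemma matrix_diff_ldistrib: "A ** (B - C) = A ** B - A ** (C::'a::ring_1^_^_)"
  by (vector matrix_matrix_mult_def sum_subtractf[symmetric] field_simps)

lemma matrix_diff_rdistrib: "(A - B) ** C = A ** C - B ** (C::'a::ring_1^_^_)"
  by (vector matrix_matrix_mult_def sum_subtractf[symmetric] field_simps)

lemma matrix_minus_left: "(- A) ** B = - (A ** (B::'a::ring_1^_^_))"
  by (vector matrix_matrix_mult_def sum_negf[symmetric])

lemma matrix_minus_right: "A ** (- B) = - (A ** (B::'a::ring_1^_^_))"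
  by (vector matrix_matrix_mult_def sum_negf[symmetric])

lemmas matrix_mult_algebra = matrix_add_ldistrib matrix_add_rdistrib matrix_diff_ldistrib
  matrix_diff_rdistrib matrix_minus_left matrix_minus_right times0_left times0_right
  scalar_matrix_assoc[symmetric] matrix_scalar_ac

lemma trace_scaleR: "trace (c *\<^sub>R A) = c * trace (A::real^'n^'n)"
  by (simp add: trace_def sum_distrib_left)

lemma trace_uminus: "trace (- A) = - trace (A::'a::comm_ring_1^'n^'n)"
  by (simp add: trace_def sum_negf)

lemma trace_zero: "trace (0::'a::semiring_1^'n^'n) = 0"
  by (simp add: trace_def)

lemmas trace_algebra = trace_add trace_sub trace_scaleR trace_uminus trace_zero

lemma bounded_linear_trace: "bounded_linear (trace :: real^'n^'n \<Rightarrow> real)"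
  by (rule linear_conv_bounded_linear[THEN iffD1]) (auto intro!: linearI simp: trace_algebra)

lemma bounded_bilinear_matrix_mult: "bounded_bilinear (\<lambda>(A::real^'n^'m) (B::real^'p^'n). A ** B)"
  by (rule bilinear_conv_bounded_bilinear[THEN iffD1])
    (auto intro!: linearI simp: bilinear_def matrix_mult_algebra)

lemma matrix_inv_right:
  fixes A :: "'a::field^'n^'n"
  assumes "det A \<noteq> 0" shows "A ** matrix_inv A = mat 1"
  using someI_ex[OF assms[folded invertible_det_nz, unfolded invertible_def]]
  by (simp add: matrix_inv_def)

lemma matrix_inv_left:
  fixes A :: "'a::field^'n^'n"
  assumes "det A \<noteq> 0" shows "matrix_inv A ** A = mat 1"
  using someI_ex[OF assms[folded invertible_det_nz, unfolded invertible_def]]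
  by (simp add: matrix_inv_def)

lemma matrix_inv_unique:
  fixes A :: "'a::field^'n^'n"
  assumes "det A \<noteq> 0" "A ** B = mat 1" shows "matrix_inv A = B"
proof -
  have "matrix_inv A = matrix_inv A ** (A ** B)" using assms by simp
  also have "\<dots> = B" using matrix_inv_left[OF assms(1)] by (simp add: matrix_mul_assoc)
  finally show ?thesis .
qed

lemma det_matrix_inv:
  fixes A :: "'a::field^'n^'n"
  assumes "det A \<noteq> 0" shows "det (matrix_inv A) = 1 / det A"
  using det_mul[of A "matrix_inv A"] matrix_inv_right[OF assms] assms by (simp add: field_simps)

lemma matrix_inv_mult:
  fixes A B :: "'a::field^'n^'n"
  assumes "det A \<noteq> 0" "det B \<noteq> 0"
  shows "matrix_inv (A ** B) = matrix_inv B ** matrix_inv A"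
proof (rule matrix_inv_unique)
  show "det (A ** B) \<noteq> 0" using assms by (simp add: det_mul)
  have "A ** B ** (matrix_inv B ** matrix_inv A) = A ** (B ** matrix_inv B) ** matrix_inv A"
    by (simp add: matrix_mul_assoc)
  thus "A ** B ** (matrix_inv B ** matrix_inv A) = mat 1"
    using assms by (simp add: matrix_inv_right)
qed

lemma matrix_inv_inv:
  fixes A :: "'a::field^'n^'n"
  assumes "det A \<noteq> 0" shows "matrix_inv (matrix_inv A) = A"
  using assms by (intro matrix_inv_unique) (simp_all add: det_matrix_inv matrix_inv_left)

lemma mat2_eq_iff: "(A::mat2) = B \<longleftrightarrow> A$1$1 = B$1$1 \<and> A$1$2 = B$1$2 \<and> A$2$1 = B$2$1 \<and> A$2$2 = B$2$2"
  by (auto simp: vec_eq_iff forall_2)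

lemma matrix_mult_nth_2: "((A::'a::semiring_1^2^'m) ** B)$i$j = A$i$1 * B$1$j + A$i$2 * B$2$j"
  by (simp add: matrix_matrix_mult_def sum_2)

lemma trace_2: "trace (A::'a::semiring_1^2^2) = A$1$1 + A$2$2"
  by (simp add: trace_def sum_2)

lemma det_2_fun: "det = (\<lambda>A::mat2. A$1$1 * A$2$2 - A$1$2 * A$2$1)"
  by (rule ext) (simp add: det_2)

lemma bounded_linear_entry: "bounded_linear (\<lambda>A::real^'n^'m. A $ i $ j)"
  by (rule bounded_linear_compose[OF bounded_linear_vec_nth bounded_linear_vec_nth])

lemma open_det_nonzero: "open {A::mat2. det A \<noteq> 0}"
  unfolding det_2_fun
  by (intro open_Collect_neq continuous_intros bounded_linear.continuous_on[OF bounded_linear_entry])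

text \<open>By Cayley--Hamilton, $A\,(\mathrm{tr}\,A\cdot 1 - A) = \det A \cdot 1$ for $2\times 2$ matrices.\<close>
definition adjugate2 :: "mat2 \<Rightarrow> mat2" where
  "adjugate2 A = trace A *\<^sub>R mat 1 - A"

lemma matrix_mult_adjugate2: "A ** adjugate2 A = det A *\<^sub>R mat 1"
  by (simp add: mat2_eq_iff matrix_mult_nth_2 adjugate2_def trace_2 mat_def det_2 algebra_simps)

lemma matrix_inv_2: "det A \<noteq> 0 \<Longrightarrow> matrix_inv A = (1 / det A) *\<^sub>R adjugate2 A"
  by (rule matrix_inv_unique) (simp_all add: matrix_scalar_ac scalar_matrix_assoc[symmetric] matrix_mult_adjugate2)

lemma has_derivative_det_2:
  "(det has_derivative (\<lambda>H. H$1$1 * A$2$2 + A$1$1 * H$2$2 - (H$1$2 * A$2$1 + A$1$2 * H$2$1))) (at (A::mat2))"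
  unfolding det_2_fun
  by (auto intro!: derivative_eq_intros bounded_linear.has_derivative[OF bounded_linear_entry])

lemma has_derivative_matrix_inv_2:
  assumes "det (A::mat2) \<noteq> 0"
  shows "(matrix_inv has_derivative (\<lambda>H. - (matrix_inv A ** H ** matrix_inv A))) (at A)"
proof -
  define dd where "dd H = H$1$1 * A$2$2 + A$1$1 * H$2$2 - (H$1$2 * A$2$1 + A$1$2 * H$2$1)" for H :: mat2
  have bl: "bounded_linear adjugate2"
    by (rule linear_conv_bounded_linear[THEN iffD1])
      (auto intro!: linearI simp: adjugate2_def trace_algebra algebra_simps)
  have "((\<lambda>B. inverse (det B) *\<^sub>R adjugate2 B) has_derivative
     (\<lambda>H. inverse (det A) *\<^sub>R adjugate2 H - (inverse (det A) * dd H * inverse (det A)) *\<^sub>R adjugate2 A)) (at A)"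
    using assms unfolding dd_def
    by (auto intro!: derivative_eq_intros has_derivative_det_2 bounded_linear.has_derivative[OF bl])
  moreover have "inverse (det A) *\<^sub>R adjugate2 H - (inverse (det A) * dd H * inverse (det A)) *\<^sub>R adjugate2 A
      = - (matrix_inv A ** H ** matrix_inv A)" for H
  proof -
    have "adjugate2 A ** H ** adjugate2 A = dd H *\<^sub>R adjugate2 A - det A *\<^sub>R adjugate2 H"
      by (simp add: dd_def mat2_eq_iff matrix_mult_nth_2 adjugate2_def trace_2 mat_def det_2 algebra_simps)
    hence "- (matrix_inv A ** H ** matrix_inv A)
        = - ((inverse (det A) * inverse (det A)) *\<^sub>R (dd H *\<^sub>R adjugate2 A - det A *\<^sub>R adjugate2 H))"
      using assms by (simp add: matrix_inv_2 matrix_mult_algebra divide_inverse)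
    thus ?thesis using assms by (simp add: algebra_simps)
  qed
  ultimately have "((\<lambda>B. inverse (det B) *\<^sub>R adjugate2 B) has_derivative
      (\<lambda>H. - (matrix_inv A ** H ** matrix_inv A))) (at A)"
    by simp
  thus ?thesis
    by (rule has_derivative_transform_within_open[OF _ open_det_nonzero])
      (use assms in \<open>auto simp: matrix_inv_2 divide_inverse\<close>)
qed

section \<open>The Lie algebra $\mathfrak{sl}(2)\times\mathfrak{sl}(2)$ and the left-invariant structures\<close>

definition Jg :: "pt \<Rightarrow> pt" where
  "Jg u = ((1 / sqrt 3) *\<^sub>R (fst u - 2 *\<^sub>R snd u), (1 / sqrt 3) *\<^sub>R (2 *\<^sub>R fst u - snd u))"

definition Pg :: "pt \<Rightarrow> pt" where
  "Pg u = (snd u, fst u)"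

definition nonsingular :: "pt \<Rightarrow> bool" where
  "nonsingular p \<longleftrightarrow> det (fst p) \<noteq> 0 \<and> det (snd p) \<noteq> 0"

lemma NN_nonsingular: "p \<in> NN \<Longrightarrow> nonsingular p"
  by (auto simp: NN_def SL2_def nonsingular_def)

lemma JN_eq_lmul_Jg: "JN p v = lmul p (Jg (lt p v))"
  by (simp add: JN_def Jg_def)

lemma PN_eq_lmul_Pg: "PN p v = lmul p (Pg (lt p v))"
  by (simp add: PN_def Pg_def)

lemma lt_lmul: "nonsingular p \<Longrightarrow> lt p (lmul p u) = u"
  by (simp add: nonsingular_def lt_def lmul_def matrix_mul_assoc matrix_inv_left prod_eq_iff)

lemma lmul_lt: "nonsingular p \<Longrightarrow> lmul p (lt p v) = v"
  by (simp add: nonsingular_def lt_def lmul_def matrix_mul_assoc matrix_inv_right prod_eq_iff)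

lemma lt_add: "lt p (v + w) = lt p v + lt p w" by (simp add: lt_def matrix_mult_algebra)
lemma lt_diff: "lt p (v - w) = lt p v - lt p w" by (simp add: lt_def matrix_mult_algebra)
lemma lt_scaleR: "lt p (c *\<^sub>R v) = c *\<^sub>R lt p v" by (simp add: lt_def matrix_mult_algebra)
lemma lt_uminus: "lt p (- v) = - lt p v" by (simp add: lt_def matrix_mult_algebra)
lemma lt_zero: "lt p 0 = 0" by (simp add: lt_def zero_prod_def)
lemma lmul_add: "lmul p (v + w) = lmul p v + lmul p w" by (simp add: lmul_def matrix_mult_algebra)
lemma lmul_diff: "lmul p (v - w) = lmul p v - lmul p w" by (simp add: lmul_def matrix_mult_algebra)
lemma lmul_scaleR: "lmul p (c *\<^sub>R v) = c *\<^sub>R lmul p v" by (simp add: lmul_def matrix_mult_algebra)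
lemma lmul_uminus: "lmul p (- v) = - lmul p v" by (simp add: lmul_def matrix_mult_algebra)
lemma lmul_zero: "lmul p 0 = 0" by (simp add: lmul_def zero_prod_def)

lemmas lt_lmul_algebra = lt_add lt_diff lt_scaleR lt_uminus lt_zero
  lmul_add lmul_diff lmul_scaleR lmul_uminus lmul_zero

lemma lmul_sum: "lmul p (\<Sum>k\<in>S. f k) = (\<Sum>k\<in>S. lmul p (f k))"
  by (induction S rule: infinite_finite_induct) (auto simp: lt_lmul_algebra)

lemma ip_sym: "ip a b = ip b a"
  unfolding ip_def by (metis trace_mul_sym)

lemma ip_add_left: "ip (a + b) c = ip a c + ip b c"
  by (simp add: ip_def matrix_mult_algebra trace_algebra add_divide_distrib)
lemma ip_add_right: "ip c (a + b) = ip c a + ip c b"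
  by (simp add: ip_def matrix_mult_algebra trace_algebra add_divide_distrib)
lemma ip_diff_left: "ip (a - b) c = ip a c - ip b c"
  by (simp add: ip_def matrix_mult_algebra trace_algebra diff_divide_distrib)
lemma ip_diff_right: "ip c (a - b) = ip c a - ip c b"
  by (simp add: ip_def matrix_mult_algebra trace_algebra diff_divide_distrib)
lemma ip_scaleR_left: "ip (r *\<^sub>R a) c = r * ip a c"
  by (simp add: ip_def matrix_mult_algebra trace_algebra)
lemma ip_scaleR_right: "ip c (r *\<^sub>R a) = r * ip c a"
  by (simp add: ip_def matrix_mult_algebra trace_algebra)
lemma ip_uminus_left: "ip (- a) c = - ip a c"
  by (simp add: ip_def matrix_mult_algebra trace_algebra)
lemma ip_uminus_right: "ip c (- a) = - ip c a"
  by (simp add: ip_def matrix_mult_algebra trace_algebra)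
lemma ip_zero_left: "ip 0 c = 0"
  by (simp add: ip_def trace_algebra)
lemma ip_zero_right: "ip c 0 = 0"
  by (simp add: ip_def trace_algebra)

lemmas ip_algebra = ip_add_left ip_add_right ip_diff_left ip_diff_right ip_scaleR_left
  ip_scaleR_right ip_uminus_left ip_uminus_right ip_zero_left ip_zero_right

lemma gL_sym: "gL u w = gL w u"
  by (simp add: gL_def ip_sym)

lemma gL_add_left: "gL (a + b) c = gL a c + gL b c" by (simp add: gL_def ip_algebra algebra_simps)
lemma gL_add_right: "gL c (a + b) = gL c a + gL c b" by (simp add: gL_def ip_algebra algebra_simps)
lemma gL_diff_left: "gL (a - b) c = gL a c - gL b c" by (simp add: gL_def ip_algebra algebra_simps)
lemma gL_diff_right: "gL c (a - b) = gL c a - gL c b" by (simp add: gL_def ip_algebra algebra_simps)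
lemma gL_scaleR_left: "gL (r *\<^sub>R a) c = r * gL a c" by (simp add: gL_def ip_algebra algebra_simps)
lemma gL_scaleR_right: "gL c (r *\<^sub>R a) = r * gL c a" by (simp add: gL_def ip_algebra algebra_simps)
lemma gL_uminus_left: "gL (- a) c = - gL a c" by (simp add: gL_def ip_algebra algebra_simps)
lemma gL_uminus_right: "gL c (- a) = - gL c a" by (simp add: gL_def ip_algebra algebra_simps)
lemma gL_zero_left: "gL 0 c = 0" by (simp add: gL_def ip_algebra)
lemma gL_zero_right: "gL c 0 = 0" by (simp add: gL_def ip_algebra)

lemmas gL_algebra = gL_add_left gL_add_right gL_diff_left gL_diff_right gL_scaleR_left
  gL_scaleR_right gL_uminus_left gL_uminus_right gL_zero_left gL_zero_right

lemma bounded_bilinear_gL: "bounded_bilinear gL"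
proof -
  have "bilinear gL" unfolding bilinear_def
    by (intro conjI allI linearI) (simp_all only: gL_algebra real_scaleR_def)
  thus ?thesis using bilinear_conv_bounded_bilinear by blast
qed

lemma inverse_sqrt3_squared: "(1 / sqrt 3) * ((1 / sqrt 3) * x) = x / (3::real)"
  by (simp add: field_simps)

lemma gL_Jg: "gL (Jg u) (Jg w) = gL u w"
proof -
  have "ip (snd u) (fst w) = ip (fst w) (snd u)" "ip (snd u) (fst u) = ip (fst u) (snd u)"
    "ip (snd w) (fst w) = ip (fst w) (snd w)" by (simp_all add: ip_sym)
  thus ?thesis
    by (simp add: gL_def Jg_def ip_algebra inverse_sqrt3_squared algebra_simps)
qed

lemma Jg_Jg: "Jg (Jg u) = - u"
  by (simp add: Jg_def prod_eq_iff mat2_eq_iff algebra_simps inverse_sqrt3_squared)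

lemma Jg_add: "Jg (u + w) = Jg u + Jg w" by (simp add: Jg_def algebra_simps)
lemma Jg_scaleR: "Jg (r *\<^sub>R u) = r *\<^sub>R Jg u" by (simp add: Jg_def algebra_simps)

lemma bounded_linear_Jg: "bounded_linear Jg"
  by (rule linear_conv_bounded_linear[THEN iffD1]) (rule linearI, simp_all only: Jg_add Jg_scaleR)

lemma Pg_Jg: "Pg (Jg u) = - Jg (Pg u)"
  by (simp add: Pg_def Jg_def prod_eq_iff algebra_simps)

lemma gL_Pg: "gL (Pg u) w = gL u (Pg w)"
  unfolding gL_def Pg_def using ip_sym by (simp add: algebra_simps)

lemma bounded_linear_Pg: "bounded_linear Pg"
  by (rule linear_conv_bounded_linear[THEN iffD1]) (rule linearI, simp_all add: Pg_def)

definition mconj :: "mat2 \<Rightarrow> mat2 \<Rightarrow> mat2" where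
  "mconj c x = c ** x ** matrix_inv c"

definition Ad :: "mat2 \<Rightarrow> pt \<Rightarrow> pt" where
  "Ad c u = (mconj c (fst u), mconj c (snd u))"

lemma mconj_add: "mconj c (x + y) = mconj c x + mconj c y" by (simp add: mconj_def matrix_mult_algebra)
lemma mconj_diff: "mconj c (x - y) = mconj c x - mconj c y" by (simp add: mconj_def matrix_mult_algebra)
lemma mconj_scaleR: "mconj c (r *\<^sub>R x) = r *\<^sub>R mconj c x" by (simp add: mconj_def matrix_mult_algebra)

lemma mconj_mult: "det c \<noteq> 0 \<Longrightarrow> mconj c (x ** y) = mconj c x ** mconj c y"
  by (simp add: mconj_def matrix_mul_assoc)
    (metis matrix_inv_left matrix_mul_assoc matrix_mul_lid)

lemma trace_mconj: "det c \<noteq> 0 \<Longrightarrow> trace (mconj c x) = trace x"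
  by (metis mconj_def matrix_inv_left matrix_mul_assoc matrix_mul_lid trace_mul_sym)

lemma ip_mconj: "det c \<noteq> 0 \<Longrightarrow> ip (mconj c x) (mconj c y) = ip x y"
  by (simp add: ip_def mconj_mult[symmetric] trace_mconj)

lemma gL_Ad: "det c \<noteq> 0 \<Longrightarrow> gL (Ad c u) (Ad c w) = gL u w"
  by (simp add: gL_def Ad_def ip_mconj)

lemma Jg_Ad: "Jg (Ad c u) = Ad c (Jg u)"
  by (simp add: Jg_def Ad_def mconj_diff mconj_scaleR)

lemma Pg_Ad: "Pg (Ad c u) = Ad c (Pg u)"
  by (simp add: Pg_def Ad_def)

lemma Ad_add: "Ad c (u + w) = Ad c u + Ad c w" by (simp add: Ad_def mconj_add)
lemma Ad_scaleR: "Ad c (r *\<^sub>R u) = r *\<^sub>R Ad c u" by (simp add: Ad_def mconj_scaleR)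

lemma bounded_linear_Ad: "bounded_linear (Ad c)"
  by (rule linear_conv_bounded_linear[THEN iffD1]) (rule linearI, simp_all only: Ad_add Ad_scaleR)

lemma lt_phi:
  assumes "det a \<noteq> 0" "det b \<noteq> 0" "det c \<noteq> 0" "nonsingular p"
  shows "lt (phi a b c p) (phi a b c v) = Ad c (lt p v)"
proof -
  have "matrix_inv (a ** fst p ** matrix_inv c) = c ** matrix_inv (fst p) ** matrix_inv a"
       "matrix_inv (b ** snd p ** matrix_inv c) = c ** matrix_inv (snd p) ** matrix_inv b"
    using assms by (simp_all add: matrix_inv_mult det_mul det_matrix_inv matrix_inv_inv
        nonsingular_def matrix_mul_assoc)
  moreover have "c ** matrix_inv (fst p) ** matrix_inv a ** (a ** fst v ** matrix_inv c)
      = c ** matrix_inv (fst p) ** (matrix_inv a ** a) ** fst v ** matrix_inv c"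
    "c ** matrix_inv (snd p) ** matrix_inv b ** (b ** snd v ** matrix_inv c)
      = c ** matrix_inv (snd p) ** (matrix_inv b ** b) ** snd v ** matrix_inv c"
    by (simp_all add: matrix_mul_assoc)
  ultimately show ?thesis
    using assms by (simp add: lt_def phi_def Ad_def mconj_def matrix_inv_left matrix_mul_assoc)
qed

lemma lmul_phi_Ad:
  assumes "det c \<noteq> 0"
  shows "lmul (phi a b c p) (Ad c u) = phi a b c (lmul p u)"
proof -
  have "a ** fst p ** matrix_inv c ** (c ** fst u ** matrix_inv c)
      = a ** fst p ** (matrix_inv c ** c) ** fst u ** matrix_inv c"
    "b ** snd p ** matrix_inv c ** (c ** snd u ** matrix_inv c)
      = b ** snd p ** (matrix_inv c ** c) ** snd u ** matrix_inv c"
    by (simp_all add: matrix_mul_assoc)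
  thus ?thesis
    using assms by (simp add: lmul_def phi_def Ad_def mconj_def matrix_inv_left matrix_mul_assoc)
qed

lemma phi_add: "phi a b c (x + y) = phi a b c x + phi a b c y"
  by (simp add: phi_def matrix_mult_algebra)

lemma phi_scaleR: "phi a b c (r *\<^sub>R x) = r *\<^sub>R phi a b c x"
  by (simp add: phi_def matrix_mult_algebra)

lemma bounded_linear_phi: "bounded_linear (phi a b c)"
  by (rule linear_conv_bounded_linear[THEN iffD1]) (rule linearI, simp_all only: phi_add phi_scaleR)

lemma galg_iff: "u \<in> galg \<longleftrightarrow> trace (fst u) = 0 \<and> trace (snd u) = 0"
  by (simp add: galg_def sl2_def mem_Times_iff)

lemma galg_add: "u \<in> galg \<Longrightarrow> w \<in> galg \<Longrightarrow> u + w \<in> galg" by (simp add: galg_iff trace_algebra)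
lemma galg_diff: "u \<in> galg \<Longrightarrow> w \<in> galg \<Longrightarrow> u - w \<in> galg" by (simp add: galg_iff trace_algebra)
lemma galg_scaleR: "u \<in> galg \<Longrightarrow> r *\<^sub>R u \<in> galg" by (simp add: galg_iff trace_algebra)
lemma galg_Jg: "u \<in> galg \<Longrightarrow> Jg u \<in> galg" by (simp add: galg_iff Jg_def trace_algebra)
lemma galg_Pg: "u \<in> galg \<Longrightarrow> Pg u \<in> galg" by (simp add: galg_iff Pg_def)

lemma galg_gL_nondegenerate:
  assumes "z \<in> galg" "\<forall>x\<in>galg. gL z x = 0" shows "z = 0"
proof -
  let ?x = "(2 *\<^sub>R transpose (fst z) + transpose (snd z), transpose (fst z) + 2 *\<^sub>R transpose (snd z))"
  have tz: "trace (fst z) = 0" "trace (snd z) = 0" using assms(1) by (auto simp: galg_iff)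
  have "?x \<in> galg" using tz by (simp add: galg_iff trace_2 transpose_def)
  hence "gL z ?x = 0" using assms(2) by blast
  hence "(fst z$1$1)^2 + (fst z$1$2)^2 + (fst z$2$1)^2 + (fst z$2$2)^2
       + (snd z$1$1)^2 + (snd z$1$2)^2 + (snd z$2$1)^2 + (snd z$2$2)^2 = 0"
    by (simp add: gL_def ip_def trace_2 matrix_mult_nth_2 transpose_def power2_eq_square field_simps)
  thus ?thesis by (simp add: prod_eq_iff mat2_eq_iff add_nonneg_eq_0_iff)
qed

definition mcomm :: "mat2 \<Rightarrow> mat2 \<Rightarrow> mat2" where
  "mcomm x y = x ** y - y ** x"

text \<open>The explicit solution of the Koszul formula defining \<open>Gam\<close>.\<close>
definition Gam0 :: "pt \<Rightarrow> pt \<Rightarrow> pt" where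
  "Gam0 u w =
    ((1/2) *\<^sub>R (mcomm (fst u) (fst w) + (1/3) *\<^sub>R (mcomm (snd u) (fst w) - mcomm (fst u) (snd w))),
     (1/2) *\<^sub>R (mcomm (snd u) (snd w) - (1/3) *\<^sub>R (mcomm (snd u) (fst w) - mcomm (fst u) (snd w))))"

lemma Gam0_koszul: "gL (Gam0 u w) x = (gL (brk u w) x - gL (brk w x) u + gL (brk x u) w) / 2"
  by (simp add: Gam0_def mcomm_def brk_def gL_def ip_def trace_2 matrix_mult_nth_2)
    (simp add: field_simps)

lemma Gam0_galg: "Gam0 u w \<in> galg"
  by (simp add: Gam0_def galg_iff trace_algebra mcomm_def trace_mul_sym[of "fst u"]
      trace_mul_sym[of "snd u"])

lemma Gam_eq_Gam0: "Gam u w = Gam0 u w"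
  unfolding Gam_def
proof (rule the_equality)
  show "Gam0 u w \<in> galg \<and>
      (\<forall>x\<in>galg. gL (Gam0 u w) x = (gL (brk u w) x - gL (brk w x) u + gL (brk x u) w) / 2)"
    using Gam0_galg Gam0_koszul by blast
next
  fix z assume z: "z \<in> galg \<and>
      (\<forall>x\<in>galg. gL z x = (gL (brk u w) x - gL (brk w x) u + gL (brk x u) w) / 2)"
  have "\<forall>x\<in>galg. gL (z - Gam0 u w) x = 0"
    using z by (simp add: gL_algebra Gam0_koszul)
  thus "z = Gam0 u w"
    using galg_gL_nondegenerate[of "z - Gam0 u w"] z Gam0_galg galg_diff by simp
qed

lemma mconj_mcomm: "det c \<noteq> 0 \<Longrightarrow> mconj c (mcomm x y) = mcomm (mconj c x) (mconj c y)"
  by (simp add: mcomm_def mconj_diff mconj_mult)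

lemma Gam0_Ad: "det c \<noteq> 0 \<Longrightarrow> Gam0 (Ad c u) (Ad c w) = Ad c (Gam0 u w)"
  by (simp add: Gam0_def Ad_def mconj_mcomm mconj_add mconj_diff mconj_scaleR)

lemma Gam0_scaleR_left: "Gam0 (r *\<^sub>R u) w = r *\<^sub>R Gam0 u w"
  by (simp add: Gam0_def mcomm_def matrix_mult_algebra algebra_simps)
lemma Gam0_scaleR_right: "Gam0 u (r *\<^sub>R w) = r *\<^sub>R Gam0 u w"
  by (simp add: Gam0_def mcomm_def matrix_mult_algebra algebra_simps)
lemma Gam0_add_left: "Gam0 (u + u') w = Gam0 u w + Gam0 u' w"
  by (simp add: Gam0_def mcomm_def matrix_mult_algebra algebra_simps)
lemma Gam0_add_right: "Gam0 u (w + w') = Gam0 u w + Gam0 u w'"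
  by (simp add: Gam0_def mcomm_def matrix_mult_algebra algebra_simps)

lemma bounded_bilinear_Gam0: "bounded_bilinear Gam0"
proof -
  have "bilinear Gam0" unfolding bilinear_def
    by (intro conjI allI linearI)
      (simp_all only: Gam0_add_left Gam0_add_right Gam0_scaleR_left Gam0_scaleR_right)
  thus ?thesis using bilinear_conv_bounded_bilinear by blast
qed

section \<open>Differentiating the left trivialisation\<close>

lemma has_derivative_matrix_mult:
  assumes "(f has_derivative f') (at x)" "(g has_derivative g') (at x)"
  shows "((\<lambda>y. (f y :: real^'n^'m) ** (g y :: real^'p^'n)) has_derivative
      (\<lambda>h. f x ** g' h + f' h ** g x)) (at x)"
  using bounded_bilinear.FDERIV[OF bounded_bilinear_matrix_mult assms] by simp

lemma has_derivative_matrix_inv_comp: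
  fixes f :: "'a::real_normed_vector \<Rightarrow> mat2"
  assumes "(f has_derivative f') (at x)" "det (f x) \<noteq> 0"
  shows "((\<lambda>y. matrix_inv (f y)) has_derivative
      (\<lambda>h. - (matrix_inv (f x) ** f' h ** matrix_inv (f x)))) (at x)"
  using has_derivative_compose[OF assms(1) has_derivative_matrix_inv_2[OF assms(2)]] by simp

text \<open>The derivative at \<open>x\<close> in direction \<open>v\<close> of \<open>q \<mapsto> lt q (Y q)\<close>, where \<open>Y x = y\<close>
  and \<open>DY v = dy\<close>.\<close>
definition lt_deriv :: "pt \<Rightarrow> pt \<Rightarrow> pt \<Rightarrow> pt \<Rightarrow> pt" where
  "lt_deriv x y dy v =
    (- (matrix_inv (fst x) ** fst v ** matrix_inv (fst x)) ** fst y + matrix_inv (fst x) ** fst dy,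
     - (matrix_inv (snd x) ** snd v ** matrix_inv (snd x)) ** snd y + matrix_inv (snd x) ** snd dy)"

lemma has_derivative_lt_field:
  assumes "nonsingular x" "(Y has_derivative DY) (at x)"
  shows "((\<lambda>q. lt q (Y q)) has_derivative (\<lambda>v. lt_deriv x (Y x) (DY v) v)) (at x)"
proof -
  have d: "det (fst x) \<noteq> 0" "det (snd x) \<noteq> 0" using assms(1) by (auto simp: nonsingular_def)
  have "((\<lambda>q. (matrix_inv (fst q) ** fst (Y q), matrix_inv (snd q) ** snd (Y q))) has_derivative
      (\<lambda>v. (matrix_inv (fst x) ** fst (DY v) + (- (matrix_inv (fst x) ** fst v ** matrix_inv (fst x))) ** fst (Y x),
            matrix_inv (snd x) ** snd (DY v) + (- (matrix_inv (snd x) ** snd v ** matrix_inv (snd x))) ** snd (Y x))))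
      (at x)"
    by (intro has_derivative_Pair has_derivative_matrix_mult has_derivative_matrix_inv_comp
        has_derivative_fst has_derivative_snd has_derivative_ident assms(2) d)
  thus ?thesis by (simp add: lt_def lt_deriv_def add.commute)
qed

lemma continuous_on_matrix_mult:
  "continuous_on S f \<Longrightarrow> continuous_on S g \<Longrightarrow>
    continuous_on S (\<lambda>x. (f x :: real^'n^'m) ** (g x :: real^'p^'n))"
  using bounded_bilinear.continuous_on[OF bounded_bilinear_matrix_mult] by blast

lemma continuous_on_matrix_inv:
  assumes "continuous_on S g" "\<forall>x\<in>S. det (g x :: mat2) \<noteq> 0"
  shows "continuous_on S (\<lambda>x. matrix_inv (g x))"
proof -
  have "continuous_on {A::mat2. det A \<noteq> 0} matrix_inv"
    by (rule continuous_at_imp_continuous_on)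
      (use has_derivative_matrix_inv_2 has_derivative_continuous in blast)
  thus ?thesis by (rule continuous_on_compose2) (use assms in auto)
qed

lemma continuous_on_lt:
  assumes "continuous_on S g" "continuous_on S h" "\<forall>x\<in>S. nonsingular (g x)"
  shows "continuous_on S (\<lambda>x. lt (g x) (h x))"
  unfolding lt_def using assms
  by (auto intro!: continuous_intros continuous_on_matrix_mult continuous_on_matrix_inv
      simp: nonsingular_def)

lemma continuous_on_lt_deriv:
  assumes "continuous_on S g" "continuous_on S y" "continuous_on S dy" "continuous_on S v"
    and "\<forall>x\<in>S. nonsingular (g x)"
  shows "continuous_on S (\<lambda>x. lt_deriv (g x) (y x) (dy x) (v x))"
  unfolding lt_deriv_def using assms
  by (auto intro!: continuous_intros continuous_on_matrix_mult continuous_on_matrix_inv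
      simp: nonsingular_def)

lemma continuous_on_gL:
  "continuous_on S f \<Longrightarrow> continuous_on S g \<Longrightarrow> continuous_on S (\<lambda>x. gL (f x) (g x))"
  using bounded_bilinear.continuous_on[OF bounded_bilinear_gL] by blast

lemma continuous_on_Gam0:
  "continuous_on S f \<Longrightarrow> continuous_on S g \<Longrightarrow> continuous_on S (\<lambda>x. Gam0 (f x) (g x))"
  using bounded_bilinear.continuous_on[OF bounded_bilinear_Gam0] by blast

lemma continuous_on_linear_apply:
  fixes D :: "'a::topological_space \<Rightarrow> 'b::euclidean_space \<Rightarrow> 'c::real_normed_vector"
  assumes "\<And>v. continuous_on S (\<lambda>x. D x v)" "\<And>x. x \<in> S \<Longrightarrow> linear (D x)" "continuous_on S g"
  shows "continuous_on S (\<lambda>x. D x (g x))"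
proof -
  have "D x (g x) = (\<Sum>b\<in>Basis. (g x \<bullet> b) *\<^sub>R D x b)" if "x \<in> S" for x
  proof -
    have "D x (g x) = D x (\<Sum>b\<in>Basis. (g x \<bullet> b) *\<^sub>R b)" by (simp add: euclidean_representation)
    thus ?thesis using assms(2)[OF that] by (simp add: linear_sum linear_scale)
  qed
  moreover have "continuous_on S (\<lambda>x. \<Sum>b\<in>Basis. (g x \<bullet> b) *\<^sub>R D x b)"
    using assms(1,3) by (intro continuous_intros) auto
  ultimately show ?thesis using continuous_on_eq by force
qed

lemma has_vector_derivative_comp_has_derivative:
  assumes "(\<gamma> has_vector_derivative v) (at t)" "(F has_derivative D) (at (\<gamma> t))"
  shows "((\<lambda>s. F (\<gamma> s)) has_vector_derivative D v) (at t)"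
proof -
  have "((\<lambda>s. F (\<gamma> s)) has_derivative (\<lambda>s. D (s *\<^sub>R v))) (at t)"
    using has_derivative_compose[OF assms(1)[unfolded has_vector_derivative_def] assms(2)] .
  moreover have "(\<lambda>s. D (s *\<^sub>R v)) = (\<lambda>s. s *\<^sub>R D v)"
    using has_derivative_bounded_linear[OF assms(2)] by (simp add: linear_scale bounded_linear.linear)
  ultimately show ?thesis by (simp add: has_vector_derivative_def)
qed

section \<open>Frames of the Lie algebra adapted to \<open>J\<close>\<close>

lemma orthogonal_sum_coefficient:
  fixes B :: "'a::real_vector \<Rightarrow> 'a \<Rightarrow> real"
  assumes lin: "\<And>y. linear (\<lambda>x. B x y)" and T: "finite T" "z \<in> T"
    and orth: "pairwise (\<lambda>x y. B x y = 0) T"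
  shows "B (\<Sum>y\<in>T. c y *\<^sub>R y) z = c z * B z z"
proof -
  have "B (\<Sum>y\<in>T. c y *\<^sub>R y) z = (\<Sum>y\<in>T. c y * B y z)"
    using linear_sum[OF lin[of z], of "\<lambda>y. c y *\<^sub>R y" T] linear_scale[OF lin[of z]] by simp
  also have "\<dots> = c z * B z z"
    by (rule sum.remove[OF T, THEN trans]) (use T orth in \<open>simp add: sum.neutral pairwise_def\<close>)
  finally show ?thesis .
qed

lemma independent_orthogonal:
  fixes B :: "'a::real_vector \<Rightarrow> 'a \<Rightarrow> real"
  assumes lin: "\<And>y. linear (\<lambda>x. B x y)" and T: "finite T"
    and orth: "pairwise (\<lambda>x y. B x y = 0) T"
    and nonnull: "\<And>x. x \<in> T \<Longrightarrow> B x x \<noteq> 0"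
  shows "independent T"
proof (rule independent_if_scalars_zero[OF T])
  fix c z assume "(\<Sum>y\<in>T. c y *\<^sub>R y) = 0" "z \<in> T"
  thus "c z = 0"
    using orthogonal_sum_coefficient[OF lin T \<open>z \<in> T\<close> orth, where c=c]
      linear_0[OF lin[of z]] nonnull[of z]
    by simp
qed

lemma span_orthogonal_eq_0:
  fixes B :: "'a::real_vector \<Rightarrow> 'a \<Rightarrow> real"
  assumes lin: "\<And>y. linear (\<lambda>x. B x y)" and T: "finite T"
    and orth: "pairwise (\<lambda>x y. B x y = 0) T"
    and nonnull: "\<And>x. x \<in> T \<Longrightarrow> B x x \<noteq> 0"
    and x: "x \<in> span T" "\<And>y. y \<in> T \<Longrightarrow> B x y = 0"
  shows "x = 0"
proof -
  obtain c where c: "x = (\<Sum>y\<in>T. c y *\<^sub>R y)" using x(1) span_finite[OF T] by auto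
  have "c z = 0" if "z \<in> T" for z
    using orthogonal_sum_coefficient[OF lin T that orth, where c=c] x(2)[OF that] nonnull[OF that] c
    by simp
  thus ?thesis using c by simp
qed

definition sl2_H :: mat2 where "sl2_H = (\<chi> i j. if i = j then (if i = 1 then 1 else -1) else 0)"
definition sl2_X :: mat2 where "sl2_X = (\<chi> i j. if i = 1 \<and> j = 2 then 1 else 0)"
definition sl2_Y :: mat2 where "sl2_Y = (\<chi> i j. if i = 2 \<and> j = 1 then 1 else 0)"

lemma sl2_decomposition:
  "trace (x::mat2) = 0 \<Longrightarrow> x = (x$1$1) *\<^sub>R sl2_H + (x$1$2) *\<^sub>R sl2_X + (x$2$1) *\<^sub>R sl2_Y"
  by (simp add: mat2_eq_iff sl2_H_def sl2_X_def sl2_Y_def trace_2)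

lemma galg_subset_span:
  "galg \<subseteq> span {(sl2_H,0), (sl2_X,0), (sl2_Y,0), (0,sl2_H), (0,sl2_X), (0,sl2_Y)}"
    (is "_ \<subseteq> span ?B")
proof
  fix u assume "u \<in> galg"
  hence "u = ((fst u$1$1) *\<^sub>R (sl2_H,0) + (fst u$1$2) *\<^sub>R (sl2_X,0) + (fst u$2$1) *\<^sub>R (sl2_Y,0))
     + ((snd u$1$1) *\<^sub>R (0,sl2_H) + (snd u$1$2) *\<^sub>R (0,sl2_X) + (snd u$2$1) *\<^sub>R (0,sl2_Y))"
    using sl2_decomposition[of "fst u"] sl2_decomposition[of "snd u"]
    by (simp add: galg_iff prod_eq_iff)
  also have "\<dots> \<in> span ?B" by (intro span_add span_scale span_base) simp_all
  finally show "u \<in> span ?B" .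
qed

text \<open>The value of \<open>gN p (E k p) (E k p)\<close> for a \<open>\<Delta>\<^sub>1\<close>-orthonormal frame.\<close>
definition metric_sign :: "nat \<Rightarrow> real" where
  "metric_sign k = (if k = 1 then -1 else 1)"

lemma metric_sign_nonzero: "metric_sign k \<noteq> 0"
  by (simp add: metric_sign_def)

lemma linear_gL_left: "linear (\<lambda>x. gL x y)"
  by (rule linearI) (simp_all add: gL_algebra)

text \<open>Pseudo-orthonormal triples \<open>e\<close> with \<open>e \<perp> J e\<close>: then \<open>e, J e\<close> is a basis of the
  six-dimensional Lie algebra.\<close>
locale J_frame =
  fixes e :: "nat \<Rightarrow> pt"
  assumes galg: "\<And>k. k \<in> {1,2,3} \<Longrightarrow> e k \<in> galg"
    and orthonormal: "\<And>i j. i \<in> {1,2,3} \<Longrightarrow> j \<in> {1,2,3} \<Longrightarrow>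
      gL (e i) (e j) = (if i = j then metric_sign i else 0)"
    and orthogonal_J: "\<And>i j. i \<in> {1,2,3} \<Longrightarrow> j \<in> {1,2,3} \<Longrightarrow> gL (e i) (Jg (e j)) = 0"
begin

lemma orthonormal_J:
  "i \<in> {1,2,3} \<Longrightarrow> j \<in> {1,2,3} \<Longrightarrow> gL (Jg (e i)) (Jg (e j)) = (if i = j then metric_sign i else 0)"
  by (simp add: gL_Jg orthonormal)

lemma J_orthogonal: "i \<in> {1,2,3} \<Longrightarrow> j \<in> {1,2,3} \<Longrightarrow> gL (Jg (e i)) (e j) = 0"
  using orthogonal_J by (simp add: gL_sym)

lemma galg_orthogonal_eq_0:
  assumes r: "r \<in> galg" "\<And>k. k \<in> {1,2,3} \<Longrightarrow> gL r (e k) = 0" "\<And>k. k \<in> {1,2,3} \<Longrightarrow> gL r (Jg (e k)) = 0"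
  shows "r = 0"
proof -
  let ?T = "{e 1, e 2, e 3, Jg (e 1), Jg (e 2), Jg (e 3)}"
  have orth: "pairwise (\<lambda>x y. gL x y = 0) ?T"
    unfolding pairwise_def by (auto simp: orthonormal orthonormal_J orthogonal_J J_orthogonal)
  have nonnull: "gL x x \<noteq> 0" if "x \<in> ?T" for x
    using that by (auto simp: orthonormal orthonormal_J metric_sign_nonzero)
  have ne: "x \<noteq> y" if "gL x y = 0" "gL x x \<noteq> 0" for x y
    using that by auto
  have "distinct [e 1, e 2, e 3, Jg (e 1), Jg (e 2), Jg (e 3)]"
    by (simp; intro conjI ne)
      (simp_all add: orthonormal orthonormal_J orthogonal_J J_orthogonal metric_sign_nonzero)
  hence card_T: "card ?T = 6" using distinct_card by fastforce
  have "r \<in> span ?T"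
  proof (rule ccontr)
    let ?B = "{(sl2_H,0), (sl2_X,0), (sl2_Y,0), (0,sl2_H), (0,sl2_X), (0,sl2_Y)}"
    assume r_notin: "r \<notin> span ?T"
    hence "independent (insert r ?T)"
      by (intro independent_insertI independent_orthogonal[OF linear_gL_left _ orth nonnull]) auto
    moreover have "insert r ?T \<subseteq> span ?B"
      using r(1) galg galg_Jg by (intro subset_trans[OF _ galg_subset_span]) auto
    ultimately have "card (insert r ?T) \<le> card ?B" using independent_span_bound[of ?B] by simp
    also have "\<dots> \<le> 6"
      using card_length[of "[(sl2_H,0), (sl2_X,0), (sl2_Y,0), (0,sl2_H), (0,sl2_X), (0,sl2_Y)]"] by simp
    finally have "card (insert r ?T) \<le> 6" .
    moreover have "r \<notin> ?T" using r_notin span_base[of _ ?T] by blast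
    ultimately show False using card_insert_disjoint[of ?T r] card_T by simp
  qed
  moreover have "gL r y = 0" if "y \<in> ?T" for y
    using that r(2,3) by auto
  ultimately show ?thesis
    using span_orthogonal_eq_0[OF linear_gL_left _ orth nonnull] by blast
qed

lemma galg_expansion:
  assumes w: "w \<in> galg"
  shows "w = (\<Sum>k\<in>{1,2,3}. (metric_sign k * gL w (e k)) *\<^sub>R e k)
           + (\<Sum>k\<in>{1,2,3}. (metric_sign k * gL w (Jg (e k))) *\<^sub>R Jg (e k))"
    (is "w = ?R")
proof -
  have sum3: "(\<Sum>k\<in>{1,2,3::nat}. f k) = f 1 + f 2 + f 3" for f :: "nat \<Rightarrow> 'a::comm_monoid_add"
    by (simp add: add.assoc)
  have "?R \<in> galg"
    unfolding sum3 using galg galg_Jg by (intro galg_add galg_scaleR) simp_all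
  hence "w - ?R = 0"
    using w unfolding sum3
    by (intro galg_orthogonal_eq_0 galg_diff)
      (auto simp: gL_algebra orthonormal orthonormal_J orthogonal_J J_orthogonal metric_sign_def)
  thus ?thesis by simp
qed

end

locale sl2_isometry =
  fixes a b c :: mat2
  assumes SL2: "a \<in> SL2" "b \<in> SL2" "c \<in> SL2"
begin

abbreviation \<phi> where "\<phi> \<equiv> phi a b c"

lemma det_nonzero: "det a \<noteq> 0" "det b \<noteq> 0" "det c \<noteq> 0"
  using SL2 by (auto simp: SL2_def)

lemma lt_image: "nonsingular x \<Longrightarrow> lt (\<phi> x) (\<phi> v) = Ad c (lt x v)"
  using lt_phi det_nonzero by blast

lemma lmul_image: "lmul (\<phi> x) (Ad c u) = \<phi> (lmul x u)"
  using lmul_phi_Ad det_nonzero by blast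

lemma gN_image: "nonsingular x \<Longrightarrow> gN (\<phi> x) (\<phi> v) (\<phi> w) = gN x v w"
  by (simp add: gN_def lt_image gL_Ad det_nonzero)

lemma JN_image: "nonsingular x \<Longrightarrow> JN (\<phi> x) (\<phi> v) = \<phi> (JN x v)"
  by (simp add: JN_eq_lmul_Jg lt_image Jg_Ad lmul_image)

lemma PN_image: "nonsingular x \<Longrightarrow> PN (\<phi> x) (\<phi> v) = \<phi> (PN x v)"
  by (simp add: PN_eq_lmul_Pg lt_image Pg_Ad lmul_image)

end

lemma Iso_o_sl2_isometry: "f \<in> Iso_o \<Longrightarrow> \<exists>a b c. sl2_isometry a b c \<and> f = phi a b c"
  unfolding Iso_o_def sl2_isometry_def by blast

section \<open>Lagrangian submanifolds with a type I frame\<close>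

lemma TM_scaleR:
  assumes "v \<in> TM M p" shows "r *\<^sub>R v \<in> TM M p"
proof -
  obtain \<gamma> where \<gamma>: "\<gamma> 0 = p" "range \<gamma> \<subseteq> M" "(\<gamma> has_vector_derivative v) (at 0)"
    using assms by (auto simp: TM_def)
  have "((\<lambda>t::real. r * t) has_vector_derivative r) (at 0)"
    using has_real_derivative_iff_has_vector_derivative[THEN iffD1, OF DERIV_cmult_Id] by simp
  hence "((\<gamma> \<circ> (\<lambda>t. r * t)) has_vector_derivative r *\<^sub>R v) (at 0)"
    by (rule vector_diff_chain_at) (use \<gamma> in simp)
  moreover have "(\<gamma> \<circ> (\<lambda>t. r * t)) 0 = p" "range (\<gamma> \<circ> (\<lambda>t. r * t)) \<subseteq> M" using \<gamma> by auto
  ultimately show ?thesis unfolding TM_def by blast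
qed

lemma TM_bounded_linear_image:
  assumes "v \<in> TM M p" "bounded_linear f" "f ` M \<subseteq> M'"
  shows "f v \<in> TM M' (f p)"
proof -
  obtain \<gamma> where \<gamma>: "\<gamma> 0 = p" "range \<gamma> \<subseteq> M" "(\<gamma> has_vector_derivative v) (at 0)"
    using assms by (auto simp: TM_def)
  have "((\<lambda>t. f (\<gamma> t)) has_vector_derivative f v) (at 0)"
    by (rule bounded_linear.has_vector_derivative[OF assms(2) \<gamma>(3)])
  moreover have "range (\<lambda>t. f (\<gamma> t)) \<subseteq> M'" using \<gamma> assms(3) by auto
  ultimately show ?thesis
    unfolding TM_def using \<gamma>(1) by (intro CollectI exI[of _ "\<lambda>t. f (\<gamma> t)"]) auto
qed

lemma lt_JN: "nonsingular p \<Longrightarrow> lt p (JN p v) = Jg (lt p v)"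
  by (simp add: JN_eq_lmul_Jg lt_lmul)

lemma lt_PN: "nonsingular p \<Longrightarrow> lt p (PN p v) = Pg (lt p v)"
  by (simp add: PN_eq_lmul_Pg lt_lmul)

lemma JN_add: "JN p (v + w) = JN p v + JN p w" by (simp add: JN_eq_lmul_Jg lt_lmul_algebra Jg_add)
lemma JN_scaleR: "JN p (r *\<^sub>R v) = r *\<^sub>R JN p v" by (simp add: JN_eq_lmul_Jg lt_lmul_algebra Jg_scaleR)
lemma PN_scaleR: "PN p (r *\<^sub>R v) = r *\<^sub>R PN p v"
  unfolding PN_eq_lmul_Pg lt_scaleR using lmul_scaleR[of p r "Pg (lt p v)"] by (simp add: Pg_def)

lemma JN_JN: "nonsingular p \<Longrightarrow> JN p (JN p v) = - v"
  by (simp add: JN_eq_lmul_Jg lt_lmul Jg_Jg lt_lmul_algebra lmul_lt)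

lemma gN_JN: "nonsingular p \<Longrightarrow> gN p (JN p v) (JN p w) = gN p v w"
  by (simp add: gN_def lt_JN gL_Jg)

lemma gN_PN: "nonsingular p \<Longrightarrow> gN p (PN p v) w = gN p v (PN p w)"
  by (simp add: gN_def lt_PN gL_Pg)

lemma PN_JN: "nonsingular p \<Longrightarrow> PN p (JN p v) = - JN p (PN p v)"
  by (simp add: PN_eq_lmul_Pg JN_eq_lmul_Jg lt_lmul Pg_Jg lt_lmul_algebra)

lemma gN_sym: "gN p v w = gN p w v" by (simp add: gN_def gL_sym)

lemma gN_add_left: "gN p (a + b) c = gN p a c + gN p b c" by (simp add: gN_def lt_lmul_algebra gL_algebra)
lemma gN_add_right: "gN p c (a + b) = gN p c a + gN p c b" by (simp add: gN_def lt_lmul_algebra gL_algebra)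
lemma gN_diff_left: "gN p (a - b) c = gN p a c - gN p b c" by (simp add: gN_def lt_lmul_algebra gL_algebra)
lemma gN_diff_right: "gN p c (a - b) = gN p c a - gN p c b" by (simp add: gN_def lt_lmul_algebra gL_algebra)
lemma gN_scaleR_left: "gN p (r *\<^sub>R a) c = r * gN p a c" by (simp add: gN_def lt_lmul_algebra gL_algebra)
lemma gN_scaleR_right: "gN p c (r *\<^sub>R a) = r * gN p c a" by (simp add: gN_def lt_lmul_algebra gL_algebra)
lemma gN_uminus_left: "gN p (- a) c = - gN p a c" by (simp add: gN_def lt_lmul_algebra gL_algebra)
lemma gN_uminus_right: "gN p c (- a) = - gN p c a" by (simp add: gN_def lt_lmul_algebra gL_algebra)

lemmas gN_algebra = gN_add_left gN_add_right gN_diff_left gN_diff_right gN_scaleR_left gN_scaleR_right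
  gN_uminus_left gN_uminus_right

definition AB_decomposition :: "pt set \<Rightarrow> pt \<Rightarrow> pt \<Rightarrow> pt \<times> pt \<Rightarrow> bool" where
  "AB_decomposition M p v xy \<longleftrightarrow>
    fst xy \<in> TM M p \<and> snd xy \<in> TM M p \<and> PN p v = fst xy + JN p (snd xy)"

lemma AB_eq_The: "AB M p v = (THE xy. AB_decomposition M p v xy)"
  by (simp add: AB_def AB_decomposition_def)

locale lagrangian_frame =
  fixes M :: "pt set" and E :: "nat \<Rightarrow> pt \<Rightarrow> pt" and \<theta> :: "nat \<Rightarrow> pt \<Rightarrow> real"
  assumes lagrangian: "lagrangian M"
    and frame: "\<And>p. p \<in> M \<Longrightarrow> Delta1_frame M p (\<lambda>i. E i p) \<and> typeI M p (\<lambda>i. E i p) (\<lambda>i. \<theta> i p)"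
begin

lemma nonsingular: "p \<in> M \<Longrightarrow> nonsingular p"
  using lagrangian NN_nonsingular unfolding lagrangian_def by (meson subsetD)

lemma JN_TM_normal: "p \<in> M \<Longrightarrow> w \<in> TM M p \<Longrightarrow> JN p w \<in> normal_space M p"
proof -
  have "\<forall>p\<in>M. JN p ` TM M p = normal_space M p" using lagrangian unfolding lagrangian_def by blast
  thus "p \<in> M \<Longrightarrow> w \<in> TM M p \<Longrightarrow> JN p w \<in> normal_space M p" by blast
qed

lemma gN_TM_JN_TM: "p \<in> M \<Longrightarrow> v \<in> TM M p \<Longrightarrow> w \<in> TM M p \<Longrightarrow> gN p v (JN p w) = 0"
  using JN_TM_normal unfolding normal_space_def by blast

lemma lt_TM_galg:
  assumes "p \<in> M" "v \<in> TM M p" shows "lt p v \<in> galg"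
proof -
  have "Jg (lt p v) \<in> galg"
    using JN_TM_normal[OF assms] lt_JN nonsingular[OF assms(1)] by (simp add: normal_space_def TN_def)
  hence "Jg (Jg (lt p v)) \<in> galg" by (rule galg_Jg)
  thus ?thesis using galg_scaleR[of "Jg (Jg (lt p v))" "-1"] by (simp add: Jg_Jg)
qed

lemma E_TM: "p \<in> M \<Longrightarrow> k \<in> {1,2,3} \<Longrightarrow> E k p \<in> TM M p"
  using frame[THEN conjunct1] unfolding Delta1_frame_def by blast

lemma gN_E_E:
  "p \<in> M \<Longrightarrow> i \<in> {1,2,3} \<Longrightarrow> j \<in> {1,2,3} \<Longrightarrow>
    gN p (E i p) (E j p) = (if i = j then metric_sign i else 0)"
  using frame[THEN conjunct1] unfolding Delta1_frame_def metric_sign_def by presburger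

lemma J_frame_lt_E:
  assumes p: "p \<in> M" shows "J_frame (\<lambda>k. lt p (E k p))"
proof
  fix i j :: nat assume i: "i \<in> {1,2,3}" and j: "j \<in> {1,2,3}"
  show "lt p (E i p) \<in> galg" by (rule lt_TM_galg[OF p E_TM[OF p i]])
  show "gL (lt p (E i p)) (lt p (E j p)) = (if i = j then metric_sign i else 0)"
    using gN_E_E[OF p i j] by (simp add: gN_def)
  show "gL (lt p (E i p)) (Jg (lt p (E j p))) = 0"
    using gN_TM_JN_TM[OF p E_TM[OF p i] E_TM[OF p j]] nonsingular[OF p] by (simp add: gN_def lt_JN)
qed

lemma TN_expansion:
  assumes p: "p \<in> M" and w: "lt p w \<in> galg"
  shows "w = (\<Sum>k\<in>{1,2,3}. (metric_sign k * gN p w (E k p)) *\<^sub>R E k p)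
           + (\<Sum>k\<in>{1,2,3}. (metric_sign k * gN p w (JN p (E k p))) *\<^sub>R JN p (E k p))"
proof -
  have "w = lmul p (lt p w)" using nonsingular[OF p] by (simp add: lmul_lt)
  also have "lt p w = (\<Sum>k\<in>{1,2,3}. (metric_sign k * gN p w (E k p)) *\<^sub>R lt p (E k p))
      + (\<Sum>k\<in>{1,2,3}. (metric_sign k * gN p w (JN p (E k p))) *\<^sub>R Jg (lt p (E k p)))"
    using J_frame.galg_expansion[OF J_frame_lt_E[OF p] w] nonsingular[OF p]
    by (simp add: gN_def lt_JN)
  finally show ?thesis
    using nonsingular[OF p] by (simp add: lmul_add lmul_sum lmul_scaleR lmul_lt JN_eq_lmul_Jg)
qed

lemma TM_expansion:
  assumes p: "p \<in> M" and v: "v \<in> TM M p"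
  shows "v = (\<Sum>k\<in>{1,2,3}. (metric_sign k * gN p v (E k p)) *\<^sub>R E k p)"
  using TN_expansion[OF p lt_TM_galg[OF p v]] gN_TM_JN_TM[OF p v] E_TM[OF p] by simp

lemma AB_decomposition_unique:
  assumes p: "p \<in> M" and "AB_decomposition M p v xy" "AB_decomposition M p v xy'"
  shows "xy = xy'"
proof -
  obtain x y x' y' where xy: "xy = (x, y)" "xy' = (x', y')" by (cases xy, cases xy')
  have TM: "x \<in> TM M p" "y \<in> TM M p" "x' \<in> TM M p" "y' \<in> TM M p"
    and eq: "x + JN p y = x' + JN p y'"
    using assms(2,3) by (auto simp: AB_decomposition_def xy)
  have "gN p x (E k p) = gN p x' (E k p)" if "k \<in> {1,2,3}" for k
    using arg_cong[OF eq, of "\<lambda>z. gN p z (E k p)"] gN_TM_JN_TM[OF p E_TM[OF p that]] TM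
    by (simp add: gN_algebra gN_sym)
  hence "x = x'" using TM_expansion[OF p TM(1)] TM_expansion[OF p TM(3)] by simp
  hence "JN p (JN p y) = JN p (JN p y')" using eq by simp
  hence "y = y'" using JN_JN[OF nonsingular[OF p]] by simp
  thus ?thesis using \<open>x = x'\<close> xy by simp
qed

lemma AB_eqI: "p \<in> M \<Longrightarrow> AB_decomposition M p v xy \<Longrightarrow> AB M p v = xy"
  unfolding AB_eq_The by (rule the_equality) (auto intro: AB_decomposition_unique)

lemma opA_opB_E:
  "p \<in> M \<Longrightarrow> i \<in> {1,2,3} \<Longrightarrow>
    opA M p (E i p) = cos (2 * \<theta> i p) *\<^sub>R E i p \<and> opB M p (E i p) = sin (2 * \<theta> i p) *\<^sub>R E i p"
  using frame unfolding typeI_def by blast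

lemma PN_E_if_decomposable:
  assumes p: "p \<in> M" and i: "i \<in> {1,2,3}" and "AB_decomposition M p (E i p) xy"
  shows "PN p (E i p) = cos (2 * \<theta> i p) *\<^sub>R E i p + JN p (sin (2 * \<theta> i p) *\<^sub>R E i p)"
  using assms AB_eqI[OF p assms(3)] opA_opB_E[OF p i]
  by (simp add: AB_decomposition_def opA_def opB_def)

lemma scaleR_E_eq_other_imp_zero:
  assumes p: "p \<in> M" and i: "i \<in> {1,2,3}" and j: "j \<in> {1,2,3}" "j \<noteq> i"
    and eq: "c *\<^sub>R E i p = c' *\<^sub>R E j p"
  shows "c = 0"
proof -
  have "c * metric_sign i = gN p (c *\<^sub>R E i p) (E i p)" using gN_E_E[OF p i i] by (simp add: gN_algebra)
  also have "\<dots> = gN p (c' *\<^sub>R E j p) (E i p)" by (simp only: eq)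
  also have "\<dots> = 0" using gN_E_E[OF p j(1) i] j(2) by (simp add: gN_algebra)
  finally show ?thesis using metric_sign_nonzero by simp
qed

text \<open>Where \<open>PN p (E i p)\<close> has no decomposition, \<open>AB\<close> is the junk value
  \<open>THE _. False\<close>. It cannot be of the form prescribed by type I for two indices at once.\<close>
lemma decomposable_if_other_not:
  assumes p: "p \<in> M" and i: "i \<in> {1,2,3}" and j: "j \<in> {1,2,3}" "j \<noteq> i"
    and not_i: "\<not> (\<exists>xy. AB_decomposition M p (E i p) xy)"
  shows "\<exists>xy. AB_decomposition M p (E j p) xy"
proof (rule ccontr)
  assume "\<not> (\<exists>xy. AB_decomposition M p (E j p) xy)"
  hence "AB_decomposition M p (E j p) = AB_decomposition M p (E i p)"
    using not_i by auto
  hence "AB M p (E j p) = AB M p (E i p)"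
    by (simp add: AB_eq_The)
  hence "cos (2 * \<theta> i p) *\<^sub>R E i p = cos (2 * \<theta> j p) *\<^sub>R E j p"
    "sin (2 * \<theta> i p) *\<^sub>R E i p = sin (2 * \<theta> j p) *\<^sub>R E j p"
    using opA_opB_E[OF p i] opA_opB_E[OF p j(1)] by (simp_all add: opA_def opB_def)
  hence "cos (2 * \<theta> i p) = 0" "sin (2 * \<theta> i p) = 0"
    using scaleR_E_eq_other_imp_zero[OF p i j] by blast+
  thus False using sin_cos_squared_add[of "2 * \<theta> i p"] by simp
qed

text \<open>\<open>P\<close> is self-adjoint and anticommutes with \<open>J\<close>; so if the other two frame vectors
  are eigenvectors of the type I form, \<open>PN p (E i p)\<close> is orthogonal to all of them and to their
  images under \<open>J\<close>, which leaves it in the span of \<open>E i p\<close> and \<open>JN p (E i p)\<close>.\<close>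
lemma decomposable_if_others:
  assumes p: "p \<in> M" and i: "i \<in> {1,2,3}"
    and others: "\<And>k. k \<in> {1,2,3} \<Longrightarrow> k \<noteq> i \<Longrightarrow> \<exists>xy. AB_decomposition M p (E k p) xy"
  shows "\<exists>xy. AB_decomposition M p (E i p) xy"
proof -
  have n: "nonsingular p" using nonsingular[OF p] .
  let ?v = "PN p (E i p)"
  have PN_others: "PN p (E k p) = cos (2 * \<theta> k p) *\<^sub>R E k p + JN p (sin (2 * \<theta> k p) *\<^sub>R E k p)"
    if "k \<in> {1,2,3}" "k \<noteq> i" for k
    using others[OF that] PN_E_if_decomposable[OF p that(1)] by blast
  have orth_E: "gN p ?v (E k p) = 0" if k: "k \<in> {1,2,3}" "k \<noteq> i" for k
    using gN_E_E[OF p i k(1)] k(2) gN_TM_JN_TM[OF p E_TM[OF p i] E_TM[OF p k(1)]] n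
    by (simp add: gN_PN PN_others[OF k] JN_scaleR gN_algebra)
  have orth_JE: "gN p ?v (JN p (E k p)) = 0" if k: "k \<in> {1,2,3}" "k \<noteq> i" for k
    using gN_E_E[OF p i k(1)] k(2) gN_TM_JN_TM[OF p E_TM[OF p i] E_TM[OF p k(1)]] n
    by (simp add: gN_PN PN_JN PN_others[OF k] JN_add JN_scaleR JN_JN gN_algebra)
  define a where "a = metric_sign i * gN p ?v (E i p)"
  define b where "b = metric_sign i * gN p ?v (JN p (E i p))"
  have "?v = (\<Sum>k\<in>{1,2,3}. (metric_sign k * gN p ?v (E k p)) *\<^sub>R E k p)
           + (\<Sum>k\<in>{1,2,3}. (metric_sign k * gN p ?v (JN p (E k p))) *\<^sub>R JN p (E k p))"
    using TM_expansion n lt_TM_galg[OF p E_TM[OF p i]]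
    by (intro TN_expansion[OF p]) (simp add: lt_PN galg_Pg)
  also have "\<dots> = a *\<^sub>R E i p + b *\<^sub>R JN p (E i p)"
    unfolding a_def b_def
    using sum.mono_neutral_left[of "{1,2,3}" "{i}"
        "\<lambda>k. (metric_sign k * gN p ?v (E k p)) *\<^sub>R E k p"]
      sum.mono_neutral_left[of "{1,2,3}" "{i}"
        "\<lambda>k. (metric_sign k * gN p ?v (JN p (E k p))) *\<^sub>R JN p (E k p)"]
      i orth_E orth_JE
    by simp
  finally have "AB_decomposition M p (E i p) (a *\<^sub>R E i p, b *\<^sub>R E i p)"
    unfolding AB_decomposition_def using TM_scaleR E_TM[OF p i] by (simp add: JN_scaleR)
  thus ?thesis by blast
qed

lemma PN_E:
  assumes p: "p \<in> M" and i: "i \<in> {1,2,3}"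
  shows "PN p (E i p) = cos (2 * \<theta> i p) *\<^sub>R E i p + JN p (sin (2 * \<theta> i p) *\<^sub>R E i p)"
proof -
  have "\<exists>xy. AB_decomposition M p (E i p) xy"
  proof (cases "\<forall>k\<in>{1,2,3} - {i}. \<exists>xy. AB_decomposition M p (E k p) xy")
    case True
    thus ?thesis by (intro decomposable_if_others[OF p i]) auto
  next
    case False
    then obtain k where "k \<in> {1,2,3}" "k \<noteq> i" "\<not> (\<exists>xy. AB_decomposition M p (E k p) xy)"
      by blast
    thus ?thesis using decomposable_if_other_not[OF p _ i] by blast
  qed
  thus ?thesis using PN_E_if_decomposable[OF p i] by blast
qed

lemma isometry_frame:
  assumes "sl2_isometry a b c" and M: "phi a b c ` M \<subseteq> M" and x: "x \<in> M"
  shows "Delta1_frame M (phi a b c x) (\<lambda>i. phi a b c (E i x))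
    \<and> typeI M (phi a b c x) (\<lambda>i. phi a b c (E i x)) (\<lambda>i. \<theta> i x)"
proof -
  interpret sl2_isometry a b c by fact
  have n: "nonsingular x" by (rule nonsingular[OF x])
  have TM_image: "\<phi> v \<in> TM M (\<phi> x)" if "v \<in> TM M x" for v
    by (rule TM_bounded_linear_image[OF that bounded_linear_phi M])
  have "Delta1_frame M (\<phi> x) (\<lambda>i. \<phi> (E i x))"
    unfolding Delta1_frame_def
    using TM_image[OF E_TM[OF x]] gN_E_E[OF x] n by (simp add: gN_image metric_sign_def)
  moreover have "AB M (\<phi> x) (\<phi> (E i x))
      = (cos (2 * \<theta> i x) *\<^sub>R \<phi> (E i x), sin (2 * \<theta> i x) *\<^sub>R \<phi> (E i x))"
    if i: "i \<in> {1,2,3}" for i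
    using M x TM_image[OF TM_scaleR[OF E_TM[OF x i]]] PN_E[OF x i] n
    by (intro AB_eqI) (auto simp: AB_decomposition_def PN_image JN_image phi_add phi_scaleR JN_scaleR)
  moreover have "\<exists>k::int. \<theta> 1 x + \<theta> 2 x + \<theta> 3 x = of_int k * pi"
    using frame[OF x] unfolding typeI_def by blast
  ultimately show ?thesis unfolding typeI_def by (simp add: opA_def opB_def)
qed

end

section \<open>Homogeneous Lagrangian submanifolds with a unique type I frame\<close>

lemma connected_finite_closedin_partition:
  assumes S: "connected S" and I: "finite I"
    and closed: "\<And>a. a \<in> I \<Longrightarrow> closedin (top_of_set S) (C a)"
    and cover: "S \<subseteq> \<Union>(C ` I)"
    and disjoint: "\<And>a b x. a \<in> I \<Longrightarrow> b \<in> I \<Longrightarrow> x \<in> C a \<Longrightarrow> x \<in> C b \<Longrightarrow> a = b"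
    and x0: "x0 \<in> S"
  shows "\<exists>a\<in>I. S \<subseteq> C a"
proof -
  obtain a0 where a0: "a0 \<in> I" "x0 \<in> C a0" using cover x0 by blast
  let ?rest = "\<Union>(C ` (I - {a0}))"
  have "closedin (top_of_set S) ?rest" by (rule closedin_Union) (use I closed in auto)
  moreover have "S \<subseteq> C a0 \<union> ?rest" "C a0 \<inter> ?rest = {}" using cover disjoint a0(1) by blast+
  ultimately have "?rest = {}"
    using S closed[OF a0(1)] a0(2) unfolding connected_closedin by blast
  thus ?thesis using \<open>S \<subseteq> C a0 \<union> ?rest\<close> a0(1) by blast
qed

lemma continuous_finite_range_eq:
  fixes f :: "'a::topological_space \<Rightarrow> 'b::real_normed_algebra_1"
  assumes "connected S" "continuous_on S f" "finite F" "f ` S \<subseteq> F" "x \<in> S" "y \<in> S"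
  shows "f x = f y"
  using continuous_finite_range_constant[OF assms(1,2) finite_subset[OF assms(4,3)]] assms(5,6)
  unfolding constant_on_def by metis

locale homogeneous_lagrangian_frame = lagrangian_frame +
  fixes U :: "pt set"
  assumes connected: "connected M" and homogeneous: "ext_homogeneous M"
    and U: "open U" "M \<subseteq> U"
    and smooth: "\<And>i. i \<in> {1,2,3} \<Longrightarrow> smooth_on (E i) U"
    and frame_unique: "\<forall>p\<in>M. \<forall>e \<psi>. Delta1_frame M p e \<and> typeI M p e \<psi> \<longrightarrow>
           (\<forall>i\<in>{1,2,3}. \<exists>j\<in>{1,2,3}. e i = E j p \<or> e i = - E j p)"
begin

lemma E_C1:
  assumes "i \<in> {1,2,3}"
  shows "continuous_on U (E i)"
    and "\<And>x. x \<in> U \<Longrightarrow> E i differentiable (at x)"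
    and "\<And>v. continuous_on U (\<lambda>x. frechet_derivative (E i) (at x) v)"
proof -
  have "Ck_on 0 (E i) U" "Ck_on (Suc 0) (E i) U"
    using smooth[OF assms] unfolding smooth_on_def by blast+
  thus "continuous_on U (E i)" "\<And>x. x \<in> U \<Longrightarrow> E i differentiable (at x)"
    "\<And>v. continuous_on U (\<lambda>x. frechet_derivative (E i) (at x) v)"
    by (simp_all del: split_paired_All)
qed

lemma continuous_on_E: "i \<in> {1,2,3} \<Longrightarrow> continuous_on M (E i)"
  using continuous_on_subset[OF E_C1(1) U(2)] .

lemma continuous_on_lt_E: "i \<in> {1,2,3} \<Longrightarrow> continuous_on M (\<lambda>x. lt x (E i x))"
  using nonsingular by (intro continuous_on_lt continuous_on_id continuous_on_E) auto

lemma isometry_onto: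
  assumes "q \<in> M" "p \<in> M"
  obtains a b c where "sl2_isometry a b c" "phi a b c ` M \<subseteq> M" "phi a b c q = p"
proof -
  obtain G where G: "G \<subseteq> Iso_o" "\<forall>f\<in>G. f ` M = M" "\<forall>p\<in>M. \<forall>q\<in>M. \<exists>f\<in>G. f p = q"
    using homogeneous unfolding ext_homogeneous_def by blast
  obtain f where f: "f \<in> G" "f q = p" using G(3) assms by blast
  obtain a b c where "sl2_isometry a b c" "f = phi a b c"
    using Iso_o_sl2_isometry G(1) f(1) by blast
  thus thesis using that G(2) f by blast
qed

lemma isometry_permutes_frame_at:
  assumes "sl2_isometry a b c" "phi a b c ` M \<subseteq> M" "x \<in> M" "i \<in> {1,2,3}"
  obtains j e where "j \<in> {1,2,3}" "e = 1 \<or> e = -1" "phi a b c (E i x) = e *\<^sub>R E j (phi a b c x)"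
proof -
  have "phi a b c x \<in> M" using assms(2,3) by blast
  hence "\<forall>i\<in>{1,2,3}. \<exists>j\<in>{1,2,3}. phi a b c (E i x) = E j (phi a b c x)
      \<or> phi a b c (E i x) = - E j (phi a b c x)"
    using frame_unique isometry_frame[OF assms(1-3)] by blast
  then obtain j where "j \<in> {1,2,3}"
    "phi a b c (E i x) = 1 *\<^sub>R E j (phi a b c x) \<or> phi a b c (E i x) = (-1) *\<^sub>R E j (phi a b c x)"
    using assms(4) by auto
  with that show thesis by blast
qed

text \<open>An isometry preserving \<open>M\<close> maps the frame to a signed permutation of itself,
  the same one at every point since \<open>M\<close> is connected.\<close>
definition permutes_frame :: "(pt \<Rightarrow> pt) \<Rightarrow> (nat \<Rightarrow> nat) \<Rightarrow> (nat \<Rightarrow> real) \<Rightarrow> bool" where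
  "permutes_frame f \<sigma> \<epsilon> \<longleftrightarrow> (\<forall>i\<in>{1,2,3}. \<sigma> i \<in> {1,2,3} \<and> (\<epsilon> i = 1 \<or> \<epsilon> i = -1) \<and>
     (\<forall>x\<in>M. f (E i x) = \<epsilon> i *\<^sub>R E (\<sigma> i) (f x)))"

lemma isometry_permutes_frame_uniformly:
  assumes iso: "sl2_isometry a b c" and M: "phi a b c ` M \<subseteq> M" and i: "i \<in> {1,2,3}"
  shows "\<exists>j e. j \<in> {1,2,3} \<and> (e = 1 \<or> e = -1) \<and> (\<forall>x\<in>M. phi a b c (E i x) = e *\<^sub>R E j (phi a b c x))"
proof (cases "M = {}")
  case False
  then obtain x0 where x0: "x0 \<in> M" by blast
  let ?f = "phi a b c" and ?I = "{1,2,3::nat} \<times> {1, -1::real}"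
  define C where "C je = {x \<in> M. ?f (E i x) - snd je *\<^sub>R E (fst je) (?f x) = 0}" for je
  have closed: "closedin (top_of_set M) (C je)" if je: "je \<in> ?I" for je
  proof -
    have "continuous_on M (\<lambda>x. E (fst je) (?f x))"
      using je M by (intro continuous_on_compose2[OF continuous_on_E]
          linear_continuous_on[OF bounded_linear_phi]) auto
    hence "continuous_on M (\<lambda>x. ?f (E i x) - snd je *\<^sub>R E (fst je) (?f x))"
      by (intro continuous_intros bounded_linear.continuous_on[OF bounded_linear_phi]
          continuous_on_E[OF i])
    thus ?thesis unfolding C_def by (rule continuous_closedin_preimage_constant)
  qed
  have cover: "M \<subseteq> \<Union>(C ` ?I)"
  proof
    fix x assume x: "x \<in> M"
    obtain j e where "j \<in> {1,2,3}" "e = 1 \<or> e = -1" "?f (E i x) = e *\<^sub>R E j (?f x)"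
      using isometry_permutes_frame_at[OF iso M x i] by blast
    hence "x \<in> C (j, e)" "(j, e) \<in> ?I" using x by (auto simp: C_def)
    thus "x \<in> \<Union>(C ` ?I)" by blast
  qed
  have disjoint: "je = je'" if "je \<in> ?I" "je' \<in> ?I" "x \<in> C je" "x \<in> C je'" for je je' x
  proof -
    obtain j e j' e' where je: "je = (j, e)" "je' = (j', e')" by (cases je, cases je')
    have j: "j \<in> {1,2,3}" "j' \<in> {1,2,3}" and e: "e = 1 \<or> e = -1" "e' = 1 \<or> e' = -1"
      using that(1,2) je by auto
    have fx: "?f x \<in> M" using M that(3) by (auto simp: C_def)
    have eq: "e *\<^sub>R E j (?f x) = e' *\<^sub>R E j' (?f x)" using that(3,4) by (simp add: C_def je)
    have "j' = j"
    proof (rule ccontr)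
      assume "j' \<noteq> j"
      with scaleR_E_eq_other_imp_zero[OF fx j(1) j(2) this eq] e show False by simp
    qed
    hence "e * metric_sign j = e' * metric_sign j"
      using arg_cong[OF eq, of "\<lambda>z. gN (?f x) z (E j (?f x))"] gN_E_E[OF fx j(1) j(1)]
      by (simp add: gN_algebra)
    thus ?thesis using \<open>j' = j\<close> je metric_sign_nonzero by simp
  qed
  have "\<exists>je\<in>?I. M \<subseteq> C je"
    by (rule connected_finite_closedin_partition[OF connected _ closed cover disjoint x0]) simp
  then obtain je where "je \<in> ?I" "M \<subseteq> C je" ..
  thus ?thesis unfolding C_def by (intro exI[of _ "fst je"] exI[of _ "snd je"]) auto
qed (intro exI[of _ 1], simp)

lemma isometry_permutes_frame:
  assumes "sl2_isometry a b c" "phi a b c ` M \<subseteq> M"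
  obtains \<sigma> \<epsilon> where "permutes_frame (phi a b c) \<sigma> \<epsilon>"
proof -
  have "\<forall>i\<in>{1,2,3}. \<exists>j e. j \<in> {1,2,3} \<and> (e = 1 \<or> e = -1) \<and>
      (\<forall>x\<in>M. phi a b c (E i x) = e *\<^sub>R E j (phi a b c x))"
    using isometry_permutes_frame_uniformly[OF assms] by blast
  then obtain \<sigma> where "\<forall>i\<in>{1,2,3}. \<exists>e. \<sigma> i \<in> {1,2,3} \<and> (e = 1 \<or> e = -1) \<and>
      (\<forall>x\<in>M. phi a b c (E i x) = e *\<^sub>R E (\<sigma> i) (phi a b c x))"
    by (rule bchoice[THEN exE])
  then obtain \<epsilon> where "permutes_frame (phi a b c) \<sigma> \<epsilon>"
    unfolding permutes_frame_def by (rule bchoice[THEN exE])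
  thus thesis by (rule that)
qed

lemma permutes_frameD:
  assumes "permutes_frame f \<sigma> \<epsilon>" "i \<in> {1,2,3}"
  shows "\<sigma> i \<in> {1,2,3}" "\<epsilon> i * \<epsilon> i = 1"
    and "\<And>x. x \<in> M \<Longrightarrow> f (E i x) = \<epsilon> i *\<^sub>R E (\<sigma> i) (f x)"
    and "\<And>x. x \<in> M \<Longrightarrow> E (\<sigma> i) (f x) = \<epsilon> i *\<^sub>R f (E i x)"
proof -
  have \<epsilon>: "\<epsilon> i = 1 \<or> \<epsilon> i = -1" using assms unfolding permutes_frame_def by blast
  show "\<sigma> i \<in> {1,2,3}" using assms unfolding permutes_frame_def by blast
  show "\<epsilon> i * \<epsilon> i = 1" using \<epsilon> by auto
  show fE: "f (E i x) = \<epsilon> i *\<^sub>R E (\<sigma> i) (f x)" if "x \<in> M" for x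
    using assms that unfolding permutes_frame_def by blast
  show "E (\<sigma> i) (f x) = \<epsilon> i *\<^sub>R f (E i x)" if "x \<in> M" for x
    using fE[OF that] \<epsilon> by auto
qed

lemma permutes_frame_metric_sign:
  assumes "sl2_isometry a b c" "phi a b c ` M \<subseteq> M" "permutes_frame (phi a b c) \<sigma> \<epsilon>"
    and x: "x \<in> M" and i: "i \<in> {1,2,3}"
  shows "metric_sign (\<sigma> i) = metric_sign i"
proof -
  interpret sl2_isometry a b c by fact
  note \<sigma> = permutes_frameD(1,2)[OF assms(3) i] permutes_frameD(3)[OF assms(3) i x]
  have "\<phi> x \<in> M" using assms(2) x by blast
  have "metric_sign i = gN (\<phi> x) (\<phi> (E i x)) (\<phi> (E i x))"
    using gN_E_E[OF x i i] nonsingular[OF x] by (simp add: gN_image)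
  also have "\<dots> = \<epsilon> i * \<epsilon> i * gN (\<phi> x) (E (\<sigma> i) (\<phi> x)) (E (\<sigma> i) (\<phi> x))"
    by (simp add: \<sigma>(3) gN_algebra)
  also have "\<dots> = metric_sign (\<sigma> i)"
    using gN_E_E[OF \<open>\<phi> x \<in> M\<close> \<sigma>(1) \<sigma>(1)] \<sigma>(2) by simp
  finally show ?thesis by simp
qed

definition angle_cos :: "nat \<Rightarrow> pt \<Rightarrow> real" where
  "angle_cos i x = metric_sign i * gN x (PN x (E i x)) (E i x)"

definition angle_sin :: "nat \<Rightarrow> pt \<Rightarrow> real" where
  "angle_sin i x = metric_sign i * gN x (PN x (E i x)) (JN x (E i x))"

lemma angle_cos_eq: "x \<in> M \<Longrightarrow> i \<in> {1,2,3} \<Longrightarrow> angle_cos i x = cos (2 * \<theta> i x)"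
  using gN_TM_JN_TM[OF _ E_TM E_TM] gN_E_E
  by (simp add: angle_cos_def PN_E JN_scaleR gN_algebra gN_sym metric_sign_def)

lemma angle_sin_eq: "x \<in> M \<Longrightarrow> i \<in> {1,2,3} \<Longrightarrow> angle_sin i x = sin (2 * \<theta> i x)"
  using gN_TM_JN_TM[OF _ E_TM E_TM] gN_E_E nonsingular
  by (simp add: angle_sin_def PN_E JN_scaleR gN_algebra gN_JN metric_sign_def)

lemma continuous_on_angle_cos: "i \<in> {1,2,3} \<Longrightarrow> continuous_on M (angle_cos i)"
proof -
  assume i: "i \<in> {1,2,3}"
  have "continuous_on M (\<lambda>x. metric_sign i * gL (Pg (lt x (E i x))) (lt x (E i x)))"
    by (intro continuous_intros continuous_on_gL continuous_on_lt_E[OF i]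
        bounded_linear.continuous_on[OF bounded_linear_Pg])
  thus ?thesis by (rule continuous_on_eq) (simp add: angle_cos_def gN_def lt_PN nonsingular)
qed

lemma continuous_on_angle_sin: "i \<in> {1,2,3} \<Longrightarrow> continuous_on M (angle_sin i)"
proof -
  assume i: "i \<in> {1,2,3}"
  have "continuous_on M (\<lambda>x. metric_sign i * gL (Pg (lt x (E i x))) (Jg (lt x (E i x))))"
    by (intro continuous_intros continuous_on_gL continuous_on_lt_E[OF i]
        bounded_linear.continuous_on[OF bounded_linear_Pg] bounded_linear.continuous_on[OF bounded_linear_Jg])
  thus ?thesis by (rule continuous_on_eq) (simp add: angle_sin_def gN_def lt_PN lt_JN nonsingular)
qed

lemma permutes_frame_angle:
  assumes iso: "sl2_isometry a b c" and M: "phi a b c ` M \<subseteq> M"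
    and perm: "permutes_frame (phi a b c) \<sigma> \<epsilon>" and q: "q \<in> M" and i: "i \<in> {1,2,3}"
  shows "angle_cos (\<sigma> i) (phi a b c q) = angle_cos i q \<and> angle_sin (\<sigma> i) (phi a b c q) = angle_sin i q"
proof -
  interpret sl2_isometry a b c by fact
  note \<epsilon> = permutes_frameD(2)[OF perm i]
  note E = permutes_frameD(4)[OF perm i q]
  have sign: "metric_sign (\<sigma> i) = metric_sign i" by (rule permutes_frame_metric_sign[OF iso M perm q i])
  have n: "nonsingular q" by (rule nonsingular[OF q])
  have "angle_cos (\<sigma> i) (\<phi> q) = metric_sign i * (\<epsilon> i * \<epsilon> i) * gN q (PN q (E i q)) (E i q)"
    unfolding angle_cos_def sign E using n by (simp add: PN_scaleR PN_image gN_image gN_scaleR_left gN_scaleR_right)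
  moreover have "angle_sin (\<sigma> i) (\<phi> q) = metric_sign i * (\<epsilon> i * \<epsilon> i) * gN q (PN q (E i q)) (JN q (E i q))"
    unfolding angle_sin_def sign E using n
    by (simp add: PN_scaleR JN_scaleR PN_image JN_image gN_image gN_scaleR_left gN_scaleR_right)
  ultimately show ?thesis by (simp add: \<epsilon> angle_cos_def angle_sin_def)
qed

definition lt_E_deriv :: "nat \<Rightarrow> pt \<Rightarrow> pt \<Rightarrow> pt" where
  "lt_E_deriv j x v = lt_deriv x (E j x) (frechet_derivative (E j) (at x) v) v"

lemma has_derivative_lt_E:
  assumes x: "x \<in> M" and j: "j \<in> {1,2,3}"
  shows "((\<lambda>q. lt q (E j q)) has_derivative lt_E_deriv j x) (at x)"
proof -
  have "(E j has_derivative frechet_derivative (E j) (at x)) (at x)"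
    using E_C1(2)[OF j] U(2) x frechet_derivative_works by blast
  from has_derivative_lt_field[OF nonsingular[OF x] this] show ?thesis
    unfolding lt_E_deriv_def .
qed

lemma LC_E:
  "x \<in> M \<Longrightarrow> j \<in> {1,2,3} \<Longrightarrow> LC x (E j) v = lmul x (lt_E_deriv j x v + Gam0 (lt x v) (lt x (E j x)))"
  by (simp add: LC_def frechet_derivative_at[OF has_derivative_lt_E, symmetric] Gam_eq_Gam0)

lemma has_vector_derivative_lt_E:
  assumes x: "x \<in> M" and j: "j \<in> {1,2,3}"
    and \<gamma>: "(\<gamma> has_vector_derivative v) (at 0)" "\<gamma> 0 = x"
  shows "((\<lambda>t. lt (\<gamma> t) (E j (\<gamma> t))) has_vector_derivative lt_E_deriv j x v) (at 0)"
  by (rule has_vector_derivative_comp_has_derivative[OF \<gamma>(1)]) (use has_derivative_lt_E[OF x j] \<gamma>(2) in simp)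

lemma lt_E_deriv_galg:
  assumes x: "x \<in> M" and j: "j \<in> {1,2,3}" and v: "v \<in> TM M x"
  shows "lt_E_deriv j x v \<in> galg"
proof -
  obtain \<gamma> where \<gamma>: "\<gamma> 0 = x" "range \<gamma> \<subseteq> M" "(\<gamma> has_vector_derivative v) (at 0)"
    using v by (auto simp: TM_def)
  have d: "((\<lambda>t. lt (\<gamma> t) (E j (\<gamma> t))) has_vector_derivative lt_E_deriv j x v) (at 0)"
    by (rule has_vector_derivative_lt_E[OF x j \<gamma>(3,1)])
  have galg: "lt (\<gamma> t) (E j (\<gamma> t)) \<in> galg" for t
    using \<gamma>(2) lt_TM_galg E_TM j by blast
  have "tr (lt_E_deriv j x v) = 0"
    if tr: "bounded_linear tr" "\<And>u. u \<in> galg \<Longrightarrow> tr u = (0::real)" for tr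
  proof -
    have "((\<lambda>t. tr (lt (\<gamma> t) (E j (\<gamma> t)))) has_vector_derivative tr (lt_E_deriv j x v)) (at 0)"
      by (rule bounded_linear.has_vector_derivative[OF tr(1) d])
    moreover have "((\<lambda>t. tr (lt (\<gamma> t) (E j (\<gamma> t)))) has_vector_derivative 0) (at 0)"
      using tr(2)[OF galg] by simp
    ultimately show ?thesis by (rule vector_derivative_unique_at)
  qed
  from this[OF bounded_linear_compose[OF bounded_linear_trace bounded_linear_fst]]
    this[OF bounded_linear_compose[OF bounded_linear_trace bounded_linear_snd]]
  show ?thesis by (simp add: galg_iff)
qed

lemma lt_LC_E:
  "x \<in> M \<Longrightarrow> j \<in> {1,2,3} \<Longrightarrow> lt x (LC x (E j) v) = lt_E_deriv j x v + Gam0 (lt x v) (lt x (E j x))"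
  using nonsingular by (simp add: LC_E lt_lmul)

lemma lt_LC_E_galg:
  assumes "x \<in> M" "i \<in> {1,2,3}" "j \<in> {1,2,3}"
  shows "lt x (LC x (E j) (E i x)) \<in> galg"
  using lt_E_deriv_galg[OF assms(1,3) E_TM[OF assms(1,2)]] Gam0_galg
  by (simp add: lt_LC_E[OF assms(1,3)] galg_add)

lemma LC_E_scaleR:
  assumes "x \<in> M" "j \<in> {1,2,3}"
  shows "LC x (E j) (r *\<^sub>R v) = r *\<^sub>R LC x (E j) v"
  using has_derivative_linear[OF has_derivative_lt_E[OF assms]]
  by (simp add: LC_E[OF assms] linear_scale lt_lmul_algebra Gam0_scaleR_left scaleR_add_right)

text \<open>\<open>LC\<close> commutes with the isometry: both the derivative term and the Lie algebra term are
  \<open>Ad c\<close>-equivariant, and the signs \<open>\<epsilon>\<close> come out by linearity.\<close>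
lemma permutes_frame_LC_E:
  assumes iso: "sl2_isometry a b c" and M: "phi a b c ` M \<subseteq> M"
    and perm: "permutes_frame (phi a b c) \<sigma> \<epsilon>"
    and x: "x \<in> M" and i: "i \<in> {1,2,3}" and j: "j \<in> {1,2,3}"
  shows "LC (phi a b c x) (E (\<sigma> j)) (E (\<sigma> i) (phi a b c x)) = (\<epsilon> i * \<epsilon> j) *\<^sub>R phi a b c (LC x (E j) (E i x))"
proof -
  interpret sl2_isometry a b c by fact
  note \<sigma>j = permutes_frameD[OF perm j]
  have \<phi>x: "\<phi> x \<in> M" using M x by blast
  have lt_E: "lt (\<phi> y) (E (\<sigma> j) (\<phi> y)) = \<epsilon> j *\<^sub>R Ad c (lt y (E j y))" if y: "y \<in> M" for y
    using nonsingular[OF y] by (simp add: \<sigma>j(4)[OF y] lt_scaleR lt_image)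
  have deriv: "lt_E_deriv (\<sigma> j) (\<phi> x) (\<phi> v) = \<epsilon> j *\<^sub>R Ad c (lt_E_deriv j x v)" if v: "v \<in> TM M x" for v
  proof -
    obtain \<gamma> where \<gamma>: "\<gamma> 0 = x" "range \<gamma> \<subseteq> M" "(\<gamma> has_vector_derivative v) (at 0)"
      using v by (auto simp: TM_def)
    have "((\<lambda>t. lt (\<phi> (\<gamma> t)) (E (\<sigma> j) (\<phi> (\<gamma> t)))) has_vector_derivative
        lt_E_deriv (\<sigma> j) (\<phi> x) (\<phi> v)) (at 0)"
      using \<gamma> by (intro has_vector_derivative_lt_E[OF \<phi>x \<sigma>j(1)]
          bounded_linear.has_vector_derivative[OF bounded_linear_phi]) auto
    moreover have "(\<lambda>t. lt (\<phi> (\<gamma> t)) (E (\<sigma> j) (\<phi> (\<gamma> t)))) = (\<lambda>t. \<epsilon> j *\<^sub>R Ad c (lt (\<gamma> t) (E j (\<gamma> t))))"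
      by (rule ext, rule lt_E) (use \<gamma>(2) in blast)
    ultimately have "((\<lambda>t. \<epsilon> j *\<^sub>R Ad c (lt (\<gamma> t) (E j (\<gamma> t)))) has_vector_derivative
        lt_E_deriv (\<sigma> j) (\<phi> x) (\<phi> v)) (at 0)"
      by simp
    moreover have "((\<lambda>t. \<epsilon> j *\<^sub>R Ad c (lt (\<gamma> t) (E j (\<gamma> t)))) has_vector_derivative
        \<epsilon> j *\<^sub>R Ad c (lt_E_deriv j x v)) (at 0)"
      by (intro bounded_linear.has_vector_derivative[OF
            bounded_linear_compose[OF bounded_linear_scaleR_right bounded_linear_Ad]]
          has_vector_derivative_lt_E[OF x j \<gamma>(3,1)])
    ultimately show ?thesis by (rule vector_derivative_unique_at)
  qed
  have LC_image: "LC (\<phi> x) (E (\<sigma> j)) (\<phi> v) = \<epsilon> j *\<^sub>R \<phi> (LC x (E j) v)" if v: "v \<in> TM M x" for v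
  proof -
    have "LC (\<phi> x) (E (\<sigma> j)) (\<phi> v) = lmul (\<phi> x) (lt_E_deriv (\<sigma> j) (\<phi> x) (\<phi> v)
        + Gam0 (lt (\<phi> x) (\<phi> v)) (lt (\<phi> x) (E (\<sigma> j) (\<phi> x))))"
      by (rule LC_E[OF \<phi>x \<sigma>j(1)])
    also have "\<dots> = lmul (\<phi> x) (\<epsilon> j *\<^sub>R Ad c (lt_E_deriv j x v + Gam0 (lt x v) (lt x (E j x))))"
      using nonsingular[OF x] det_nonzero
      by (simp add: deriv[OF v] lt_E[OF x] lt_image Gam0_scaleR_right Gam0_Ad Ad_add Ad_scaleR
          scaleR_add_right)
    also have "\<dots> = \<epsilon> j *\<^sub>R \<phi> (LC x (E j) v)"
      by (simp add: lmul_scaleR lmul_image LC_E[OF x j] phi_scaleR)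
    finally show ?thesis .
  qed
  have "E (\<sigma> i) (\<phi> x) = \<phi> (\<epsilon> i *\<^sub>R E i x)"
    using permutes_frameD(4)[OF perm i x] by (simp add: phi_scaleR)
  hence "LC (\<phi> x) (E (\<sigma> j)) (E (\<sigma> i) (\<phi> x)) = \<epsilon> j *\<^sub>R \<phi> (LC x (E j) (\<epsilon> i *\<^sub>R E i x))"
    using LC_image[OF TM_scaleR[OF E_TM[OF x i]]] by simp
  thus ?thesis by (simp add: LC_E_scaleR[OF x j] phi_scaleR)
qed

definition omega_coef :: "nat \<Rightarrow> nat \<Rightarrow> nat \<Rightarrow> pt \<Rightarrow> real" where
  "omega_coef i j k x = metric_sign k * gN x (LC x (E j) (E i x)) (E k x)"

definition h_coef :: "nat \<Rightarrow> nat \<Rightarrow> nat \<Rightarrow> pt \<Rightarrow> real" where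
  "h_coef i j k x = metric_sign k * gN x (LC x (E j) (E i x)) (JN x (E k x))"

lemma LC_E_expansion:
  assumes "x \<in> M" "i \<in> {1,2,3}" "j \<in> {1,2,3}"
  shows "LC x (E j) (E i x) =
    (\<Sum>k\<in>{1,2,3}. omega_coef i j k x *\<^sub>R E k x) + (\<Sum>k\<in>{1,2,3}. h_coef i j k x *\<^sub>R JN x (E k x))"
  using TN_expansion[OF assms(1) lt_LC_E_galg[OF assms]] by (simp only: omega_coef_def h_coef_def)

lemma continuous_on_lt_LC_E:
  assumes i: "i \<in> {1,2,3}" and j: "j \<in> {1,2,3}"
  shows "continuous_on M (\<lambda>x. lt x (LC x (E j) (E i x)))"
proof -
  have n: "\<forall>x\<in>M. nonsingular x" using nonsingular by blast
  have "continuous_on M (\<lambda>x. frechet_derivative (E j) (at x) (E i x))"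
  proof (rule continuous_on_linear_apply[where D="\<lambda>x. frechet_derivative (E j) (at x)"])
    show "continuous_on M (\<lambda>x. frechet_derivative (E j) (at x) v)" for v
      by (rule continuous_on_subset[OF E_C1(3)[OF j] U(2)])
    show "linear (frechet_derivative (E j) (at x))" if "x \<in> M" for x
      using linear_frechet_derivative[OF E_C1(2)[OF j]] U(2) that by blast
  qed (rule continuous_on_E[OF i])
  hence "continuous_on M (\<lambda>x. lt_deriv x (E j x) (frechet_derivative (E j) (at x) (E i x)) (E i x)
      + Gam0 (lt x (E i x)) (lt x (E j x)))"
    by (intro continuous_intros continuous_on_lt_deriv continuous_on_Gam0 continuous_on_id
        continuous_on_E continuous_on_lt_E n i j)
  thus ?thesis by (rule continuous_on_eq) (simp add: lt_LC_E[OF _ j] lt_E_deriv_def)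
qed

lemma continuous_on_coefs:
  assumes "i \<in> {1,2,3}" "j \<in> {1,2,3}" "k \<in> {1,2,3}"
  shows "continuous_on M (omega_coef i j k)" "continuous_on M (h_coef i j k)"
proof -
  have "continuous_on M (\<lambda>x. metric_sign k * gL (lt x (LC x (E j) (E i x))) (lt x (E k x)))"
    "continuous_on M (\<lambda>x. metric_sign k * gL (lt x (LC x (E j) (E i x))) (Jg (lt x (E k x))))"
    using assms by (intro continuous_intros continuous_on_gL continuous_on_lt_LC_E continuous_on_lt_E
        bounded_linear.continuous_on[OF bounded_linear_Jg]; simp)+
  thus "continuous_on M (omega_coef i j k)" "continuous_on M (h_coef i j k)"
    by (auto elim!: continuous_on_eq simp: omega_coef_def h_coef_def gN_def lt_JN nonsingular)
qed

lemma permutes_frame_coefs: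
  assumes iso: "sl2_isometry a b c" and M: "phi a b c ` M \<subseteq> M"
    and perm: "permutes_frame (phi a b c) \<sigma> \<epsilon>" and q: "q \<in> M"
    and i: "i \<in> {1,2,3}" and j: "j \<in> {1,2,3}" and k: "k \<in> {1,2,3}"
  defines "r \<equiv> \<epsilon> i * \<epsilon> j * \<epsilon> k"
  shows "omega_coef i j k q = r * omega_coef (\<sigma> i) (\<sigma> j) (\<sigma> k) (phi a b c q)"
    and "h_coef i j k q = r * h_coef (\<sigma> i) (\<sigma> j) (\<sigma> k) (phi a b c q)"
proof -
  interpret sl2_isometry a b c by fact
  have rr: "r * r = 1"
    using permutes_frameD(2)[OF perm i] permutes_frameD(2)[OF perm j] permutes_frameD(2)[OF perm k]
    unfolding r_def by algebra
  note Ek = permutes_frameD(4)[OF perm k q]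
  have "omega_coef (\<sigma> i) (\<sigma> j) (\<sigma> k) (\<phi> q) = r * omega_coef i j k q"
    "h_coef (\<sigma> i) (\<sigma> j) (\<sigma> k) (\<phi> q) = r * h_coef i j k q"
    using nonsingular[OF q] permutes_frame_metric_sign[OF iso M perm q k]
    by (simp_all add: omega_coef_def h_coef_def permutes_frame_LC_E[OF iso M perm q i j] Ek
        gN_algebra gN_image JN_image JN_scaleR r_def)
  thus "omega_coef i j k q = r * omega_coef (\<sigma> i) (\<sigma> j) (\<sigma> k) (\<phi> q)"
    "h_coef i j k q = r * h_coef (\<sigma> i) (\<sigma> j) (\<sigma> k) (\<phi> q)"
    using rr by (simp_all add: mult.assoc[symmetric])
qed

lemma angle_constant:
  assumes i: "i \<in> {1,2,3}" and p: "p \<in> M" and p0: "p0 \<in> M"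
  shows "cos (2 * \<theta> i p) = cos (2 * \<theta> i p0) \<and> sin (2 * \<theta> i p) = sin (2 * \<theta> i p0)"
proof -
  have orbit: "angle_cos i q \<in> (\<lambda>j. angle_cos j p0) ` {1,2,3}"
    "angle_sin i q \<in> (\<lambda>j. angle_sin j p0) ` {1,2,3}" if q: "q \<in> M" for q
  proof -
    obtain a b c where iso: "sl2_isometry a b c" "phi a b c ` M \<subseteq> M" "phi a b c q = p0"
      using isometry_onto[OF q p0] .
    obtain \<sigma> \<epsilon> where perm: "permutes_frame (phi a b c) \<sigma> \<epsilon>"
      using isometry_permutes_frame[OF iso(1,2)] .
    have eq: "angle_cos i q = angle_cos (\<sigma> i) p0" "angle_sin i q = angle_sin (\<sigma> i) p0"
      using permutes_frame_angle[OF iso(1,2) perm q i] iso(3) by simp_all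
    show "angle_cos i q \<in> (\<lambda>j. angle_cos j p0) ` {1,2,3}"
      "angle_sin i q \<in> (\<lambda>j. angle_sin j p0) ` {1,2,3}"
      by (rule rev_image_eqI[OF permutes_frameD(1)[OF perm i]], rule eq)+
  qed
  have "angle_cos i p = angle_cos i p0"
    by (rule continuous_finite_range_eq[where F="(\<lambda>j. angle_cos j p0) ` {1,2,3}",
          OF connected continuous_on_angle_cos[OF i] _ _ p p0]) (use orbit in blast)+
  moreover have "angle_sin i p = angle_sin i p0"
    by (rule continuous_finite_range_eq[where F="(\<lambda>j. angle_sin j p0) ` {1,2,3}",
          OF connected continuous_on_angle_sin[OF i] _ _ p p0]) (use orbit in blast)+
  ultimately show ?thesis
    using angle_cos_eq[OF p i] angle_cos_eq[OF p0 i] angle_sin_eq[OF p i] angle_sin_eq[OF p0 i]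
    by simp
qed

lemma coefs_constant:
  assumes ijk: "i \<in> {1,2,3}" "j \<in> {1,2,3}" "k \<in> {1,2,3}" and p: "p \<in> M" and p0: "p0 \<in> M"
  shows "omega_coef i j k p = omega_coef i j k p0" "h_coef i j k p = h_coef i j k p0"
proof -
  let ?S = "{1, -1::real} \<times> {1,2,3::nat} \<times> {1,2,3::nat} \<times> {1,2,3::nat}"
  have orbit: "omega_coef i j k q \<in> (\<lambda>(r, i', j', k'). r * omega_coef i' j' k' p0) ` ?S"
    "h_coef i j k q \<in> (\<lambda>(r, i', j', k'). r * h_coef i' j' k' p0) ` ?S" if q: "q \<in> M" for q
  proof -
    obtain a b c where iso: "sl2_isometry a b c" "phi a b c ` M \<subseteq> M" "phi a b c q = p0"
      using isometry_onto[OF q p0] .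
    obtain \<sigma> \<epsilon> where perm: "permutes_frame (phi a b c) \<sigma> \<epsilon>"
      using isometry_permutes_frame[OF iso(1,2)] .
    have \<epsilon>: "\<epsilon> l \<in> {1, -1}" if "l \<in> {1,2,3}" for l
      using perm that unfolding permutes_frame_def by auto
    have "\<epsilon> i * \<epsilon> j * \<epsilon> k \<in> {1, -1}"
      using \<epsilon>[OF ijk(1)] \<epsilon>[OF ijk(2)] \<epsilon>[OF ijk(3)] by auto
    hence S: "(\<epsilon> i * \<epsilon> j * \<epsilon> k, \<sigma> i, \<sigma> j, \<sigma> k) \<in> ?S"
      using permutes_frameD(1)[OF perm ijk(1)] permutes_frameD(1)[OF perm ijk(2)]
        permutes_frameD(1)[OF perm ijk(3)] by (simp only: mem_Times_iff fst_conv snd_conv)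
    show "omega_coef i j k q \<in> (\<lambda>(r, i', j', k'). r * omega_coef i' j' k' p0) ` ?S"
      "h_coef i j k q \<in> (\<lambda>(r, i', j', k'). r * h_coef i' j' k' p0) ` ?S"
      by (rule rev_image_eqI[OF S], simp add: permutes_frame_coefs[OF iso(1,2) perm q ijk] iso(3))+
  qed
  show "omega_coef i j k p = omega_coef i j k p0"
    by (rule continuous_finite_range_eq[where F="(\<lambda>(r, i', j', k'). r * omega_coef i' j' k' p0) ` ?S",
          OF connected continuous_on_coefs(1)[OF ijk] _ _ p p0]) (use orbit in blast)+
  show "h_coef i j k p = h_coef i j k p0"
    by (rule continuous_finite_range_eq[where F="(\<lambda>(r, i', j', k'). r * h_coef i' j' k' p0) ` ?S",
          OF connected continuous_on_coefs(2)[OF ijk] _ _ p p0]) (use orbit in blast)+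
qed

lemma LC_E_expansion_constant:
  assumes p: "p \<in> M" and p0: "p0 \<in> M" and ij: "i \<in> {1,2,3}" "j \<in> {1,2,3}"
  shows "LC p (E j) (E i p) =
    (\<Sum>k\<in>{1,2,3}. omega_coef i j k p0 *\<^sub>R E k p) + (\<Sum>k\<in>{1,2,3}. h_coef i j k p0 *\<^sub>R JN p (E k p))"
proof -
  have "(\<Sum>k\<in>{1,2,3}. omega_coef i j k p *\<^sub>R E k p) = (\<Sum>k\<in>{1,2,3}. omega_coef i j k p0 *\<^sub>R E k p)"
    "(\<Sum>k\<in>{1,2,3}. h_coef i j k p *\<^sub>R JN p (E k p)) = (\<Sum>k\<in>{1,2,3}. h_coef i j k p0 *\<^sub>R JN p (E k p))"
    using coefs_constant[OF ij _ p p0] by (auto intro!: sum.cong simp del: insert_iff)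
  thus ?thesis using LC_E_expansion[OF p ij] by simp
qed

end

theorem mainTheorem6:
  fixes M :: "pt set" and E :: "nat \<Rightarrow> pt \<Rightarrow> pt" and \<theta> :: "nat \<Rightarrow> pt \<Rightarrow> real"
  assumes "lagrangian M" and "connected M" and "ext_homogeneous M"
    and "\<exists>U. open U \<and> M \<subseteq> U \<and> (\<forall>i\<in>{1,2,3}. smooth_on (E i) U)"
    and "\<forall>p\<in>M. Delta1_frame M p (\<lambda>i. E i p) \<and> typeI M p (\<lambda>i. E i p) (\<lambda>i. \<theta> i p)"
    and "\<forall>p\<in>M. \<forall>e \<psi>. Delta1_frame M p e \<and> typeI M p e \<psi> \<longrightarrow>
           (\<forall>i\<in>{1,2,3}. \<exists>j\<in>{1,2,3}. e i = E j p \<or> e i = - E j p)"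
  shows "(\<exists>t. \<forall>i\<in>{1,2,3}. \<forall>p\<in>M. cos (2 * \<theta> i p) = cos (2 * t i) \<and> sin (2 * \<theta> i p) = sin (2 * t i))
       \<and> (\<exists>\<omega> h. \<forall>p\<in>M. \<forall>i\<in>{1,2,3}. \<forall>j\<in>{1,2,3}.
            LC p (E j) (E i p) = (\<Sum>k\<in>{1,2,3}. \<omega> i j k *\<^sub>R E k p) + (\<Sum>k\<in>{1,2,3}. h i j k *\<^sub>R JN p (E k p)))"
proof (cases "M = {}")
  case False
  then obtain p0 where p0: "p0 \<in> M" by blast
  obtain U where U: "open U" "M \<subseteq> U" "\<forall>i\<in>{1,2,3}. smooth_on (E i) U" using assms(4) by blast
  interpret homogeneous_lagrangian_frame M E \<theta> U
  proof
    show "lagrangian M" "connected M" "ext_homogeneous M" "open U" "M \<subseteq> U" by fact+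
    show "\<And>p. p \<in> M \<Longrightarrow> Delta1_frame M p (\<lambda>i. E i p) \<and> typeI M p (\<lambda>i. E i p) (\<lambda>i. \<theta> i p)"
      "\<And>i. i \<in> {1,2,3} \<Longrightarrow> smooth_on (E i) U" using assms(5) U(3) by blast+
  qed (rule assms(6))
  have "\<forall>i\<in>{1,2,3}. \<forall>p\<in>M. cos (2 * \<theta> i p) = cos (2 * \<theta> i p0) \<and> sin (2 * \<theta> i p) = sin (2 * \<theta> i p0)"
    using angle_constant[OF _ _ p0] by blast
  moreover have "\<forall>p\<in>M. \<forall>i\<in>{1,2,3}. \<forall>j\<in>{1,2,3}. LC p (E j) (E i p) =
      (\<Sum>k\<in>{1,2,3}. omega_coef i j k p0 *\<^sub>R E k p) + (\<Sum>k\<in>{1,2,3}. h_coef i j k p0 *\<^sub>R JN p (E k p))"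
    using LC_E_expansion_constant[OF _ p0] by blast
  ultimately show ?thesis
    by (intro conjI exI[of _ "\<lambda>i. \<theta> i p0"] exI[of _ "\<lambda>i j k. omega_coef i j k p0"]
        exI[of _ "\<lambda>i j k. h_coef i j k p0"])
qed simp

end
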